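(* (1) Almost all trees have the property that, for every assignment of nonzero real weights to their edges, the resulting weighted tree contains at least two sedentary vertices. (2) For every fixed integer $k\ge3$, almost all unweighted trees contain $k$ sedentary vertices.
   Context: "Almost all trees have property $P$" means the proportion of trees on $n$ vertices having $P$ tends to $1$ as $n\to\infty$. For a weighted graph with weighted adjacency matrix $A$, $U(t)=e^{itA}$; a vertex $u$ is sedentary if $\inf_{t>0}|U(t)_{u,u}|\ge C$ for some constant $0<C\le1$. Unweighted means all edge weights equal $1$. *)

theory Defs
  imports Complex_Main
begin

definition adj :: "nat set set \<Rightarrow> nat \<Rightarrow> nat \<Rightarrow> bool" where
  "adj T u v \<longleftrightarrow> {u, v} \<in> T"

definition is_cycle :: "nat set set \<Rightarrow> nat list \<Rightarrow> bool" where
  "is_cycle T vs \<longleftrightarrow> length vs \<ge> 3 \<and> distinct vs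
     \<and> (\<forall>i. Suc i < length vs \<longrightarrow> adj T (vs ! i) (vs ! Suc i))
     \<and> adj T (last vs) (hd vs)"

definition is_tree :: "nat \<Rightarrow> nat set set \<Rightarrow> bool" where
  "is_tree n T \<longleftrightarrow>
     T \<subseteq> {e. \<exists>u v. e = {u, v} \<and> u \<noteq> v \<and> u < n \<and> v < n}
     \<and> (\<forall>u<n. \<forall>v<n. (adj T)\<^sup>*\<^sup>* u v)
     \<and> (\<nexists>vs. is_cycle T vs)"

definition trees :: "nat \<Rightarrow> nat set set set" where
  "trees n = {T. is_tree n T}"

definition almost_all_trees :: "(nat \<Rightarrow> nat set set \<Rightarrow> bool) \<Rightarrow> bool" where
  "almost_all_trees P \<longleftrightarrow>
     (\<lambda>n. real (card {T \<in> trees n. P n T}) / real (card (trees n))) \<longlonglongrightarrow> 1"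

text \<open>Weighted adjacency matrix (n x n matrices as functions with indices < n).\<close>
definition wadj :: "nat set set \<Rightarrow> (nat set \<Rightarrow> real) \<Rightarrow> nat \<Rightarrow> nat \<Rightarrow> real" where
  "wadj T w u v = (if {u, v} \<in> T then w {u, v} else 0)"

fun mpow :: "nat \<Rightarrow> (nat \<Rightarrow> nat \<Rightarrow> complex) \<Rightarrow> nat \<Rightarrow> nat \<Rightarrow> nat \<Rightarrow> complex" where
  "mpow n A 0 = (\<lambda>i j. if i = j then 1 else 0)"
| "mpow n A (Suc k) = (\<lambda>i j. \<Sum>l<n. mpow n A k i l * A l j)"

definition U :: "nat \<Rightarrow> (nat \<Rightarrow> nat \<Rightarrow> real) \<Rightarrow> real \<Rightarrow> nat \<Rightarrow> nat \<Rightarrow> complex" where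
  "U n A t u v = (\<Sum>k. ((\<i> * complex_of_real t) ^ k / of_nat (fact k))
                       * mpow n (\<lambda>i j. complex_of_real (A i j)) k u v)"

definition sedentary :: "nat \<Rightarrow> (nat \<Rightarrow> nat \<Rightarrow> real) \<Rightarrow> nat \<Rightarrow> bool" where
  "sedentary n A u \<longleftrightarrow>
     (\<exists>C::real. 0 < C \<and> C \<le> 1 \<and> (INF t\<in>{0<..}. cmod (U n A t u u)) \<ge> C)"

end

theory Submission
  imports Defs
begin

text \<open>A vertex u whose only neighbour is r is sedentary as soon as its edge carries less than
  half of the total squared weight of the pendant edges at r. Indeed, write the unit vector at u
  as p + q, where q is its projection onto the vector of pendant weights at r; then A p = 0, so
  U(t) at (u, u) equals 1 - |q|^2 plus the quadratic form of the unitary U(t) at q, and has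
  modulus at least 1 - 2 |q|^2 > 0. Among three or more pendant edges at least two are light in
  this sense, and for unit weights all of them are.

  It remains to see that for fixed m almost every tree has a hub, a vertex with m pendant leaves.
  Start from a tree without one and a vertex w of degree at most four, and m times cut out a
  vertex of degree at most two (joining its neighbours) and hang it on w. Each move has about n/2
  choices, whereas a move is undone in at most 2mn ways; the resulting trees are within 4m edges
  of a tree without hubs and so have at most 16m hubs. Comparing counts bounds the fraction of
  trees without hubs by a constant times 1/n.\<close>

section \<open>Graphs on an initial segment of the naturals\<close>

definition neighbours :: "nat set set \<Rightarrow> nat \<Rightarrow> nat set" where
  "neighbours T x = {y. {x, y} \<in> T}"

definition degree :: "nat set set \<Rightarrow> nat \<Rightarrow> nat" where
  "degree T x = card (neighbours T x)"

definition graph_on :: "nat \<Rightarrow> nat set set \<Rightarrow> bool" where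
  "graph_on n T \<longleftrightarrow> T \<subseteq> {e. \<exists>u v. e = {u, v} \<and> u \<noteq> v \<and> u < n \<and> v < n}"

definition connected_on :: "nat \<Rightarrow> nat set set \<Rightarrow> bool" where
  "connected_on n T \<longleftrightarrow> (\<forall>u<n. \<forall>v<n. (adj T)\<^sup>*\<^sup>* u v)"

lemma adj_commute: "adj T u v = adj T v u"
  unfolding adj_def by (simp add: insert_commute)

lemma rtranclp_adj_sym: "(adj T)\<^sup>*\<^sup>* u v \<Longrightarrow> (adj T)\<^sup>*\<^sup>* v u"
proof (induction rule: rtranclp_induct)
  case (step y z)
  then show ?case using adj_commute by (metis converse_rtranclp_into_rtranclp)
qed simp

lemma rtranclp_adj_map:
  assumes "\<And>x y. adj T x y \<Longrightarrow> (adj T')\<^sup>*\<^sup>* (f x) (f y)"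
  shows "(adj T)\<^sup>*\<^sup>* u v \<Longrightarrow> (adj T')\<^sup>*\<^sup>* (f u) (f v)"
proof (induction rule: rtranclp_induct)
  case (step y z)
  then show ?case using assms by (meson rtranclp_trans)
qed simp

lemma connected_onI:
  assumes "\<And>u. u < n \<Longrightarrow> (adj T)\<^sup>*\<^sup>* u c"
  shows "connected_on n T"
  unfolding connected_on_def using assms rtranclp_adj_sym rtranclp_trans by metis

lemma graph_on_finite: "graph_on n T \<Longrightarrow> finite T"
  unfolding graph_on_def by (rule finite_subset[of _ "Pow {..<n}"]) auto

lemma graph_on_edgeE:
  assumes "graph_on n T" "e \<in> T"
  obtains u v where "e = {u, v}" "u \<noteq> v" "u < n" "v < n"
  using assms unfolding graph_on_def by auto

lemma graph_on_adjD: "graph_on n T \<Longrightarrow> adj T u v \<Longrightarrow> u \<noteq> v \<and> u < n \<and> v < n"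
  unfolding graph_on_def adj_def by (auto simp: doubleton_eq_iff)

lemma graph_on_Un: "graph_on n A \<Longrightarrow> graph_on n B \<Longrightarrow> graph_on n (A \<union> B)"
  unfolding graph_on_def by (rule Un_least)

lemma mem_neighbours_iff: "y \<in> neighbours T x \<longleftrightarrow> adj T x y"
  unfolding neighbours_def adj_def by simp

lemma neighbours_subset: "graph_on n T \<Longrightarrow> neighbours T x \<subseteq> {..<n}"
  by (auto simp: mem_neighbours_iff dest: graph_on_adjD)

lemma finite_neighbours: "graph_on n T \<Longrightarrow> finite (neighbours T x)"
  by (rule finite_subset[OF neighbours_subset]) simp_all

lemma not_mem_neighbours_self: "graph_on n T \<Longrightarrow> s \<notin> neighbours T s"
  by (auto simp: mem_neighbours_iff dest: graph_on_adjD)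

lemma neighbours_eq_singletonE:
  assumes p: "graph_on n T" and d: "degree T s = 1"
  obtains a where "neighbours T s = {a}" "a < n" "a \<noteq> s"
proof -
  obtain a where a: "neighbours T s = {a}" using d unfolding degree_def by (meson card_1_singletonE)
  then have "adj T s a" using mem_neighbours_iff by blast
  then show ?thesis using that a graph_on_adjD[OF p] by blast
qed

lemma neighbours_eq_doubletonE:
  assumes p: "graph_on n T" and d: "degree T s = 2"
  obtains a b where "neighbours T s = {a, b}" "a \<noteq> b" "a < n" "b < n" "a \<noteq> s" "b \<noteq> s"
proof -
  obtain a b where ab: "neighbours T s = {a, b}" "a \<noteq> b"
    using d unfolding degree_def by (meson card_2_iff)
  then have "adj T s a" "adj T s b" using mem_neighbours_iff by blast+
  then show ?thesis using that ab graph_on_adjD[OF p] by blast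
qed

lemma edges_containing:
  assumes "graph_on n T"
  shows "{e \<in> T. s \<in> e} = (\<lambda>x. {s, x}) ` neighbours T s"
proof (intro equalityI subsetI)
  fix e assume e: "e \<in> {e \<in> T. s \<in> e}"
  then obtain u v where "e = {u, v}" using graph_on_edgeE[OF assms] by blast
  with e show "e \<in> (\<lambda>x. {s, x}) ` neighbours T s"
    unfolding neighbours_def by (auto simp: insert_commute)
qed (auto simp: neighbours_def)

lemma card_edges_containing: "graph_on n T \<Longrightarrow> card {e \<in> T. s \<in> e} = degree T s"
  unfolding edges_containing degree_def
  by (rule card_image) (auto intro: inj_onI simp: doubleton_eq_iff)

lemma sum_degree:
  assumes p: "graph_on n T"
  shows "(\<Sum>v<n. degree T v) = 2 * card T"
proof -
  have ends: "card {v \<in> {..<n}. v \<in> e} = 2" if "e \<in> T" for e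
  proof -
    obtain u v where "e = {u, v}" "u \<noteq> v" "u < n" "v < n"
      using graph_on_edgeE[OF p \<open>e \<in> T\<close>] by blast
    then have "{v \<in> {..<n}. v \<in> e} = {u, v}" by auto
    then show ?thesis using \<open>u \<noteq> v\<close> by simp
  qed
  have "(\<Sum>v<n. degree T v) = (\<Sum>v<n. card {e \<in> T. v \<in> e})"
    using card_edges_containing[OF p] by simp
  also have "\<dots> = (\<Sum>v<n. \<Sum>e\<in>T. if v \<in> e then 1::nat else 0)"
    using graph_on_finite[OF p] by (simp add: sum.inter_filter[symmetric])
  also have "\<dots> = (\<Sum>e\<in>T. \<Sum>v<n. if v \<in> e then 1::nat else 0)" by (rule sum.swap)
  also have "\<dots> = (\<Sum>e\<in>T. card {v \<in> {..<n}. v \<in> e})"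
    by (simp add: sum.inter_filter[symmetric])
  also have "\<dots> = 2 * card T" using ends by simp
  finally show ?thesis .
qed

definition hops :: "nat set set \<Rightarrow> nat \<Rightarrow> nat \<Rightarrow> nat" where
  "hops T r x = (LEAST k. (adj T ^^ k) x r)"

lemma relpowp_hops: "(adj T)\<^sup>*\<^sup>* x r \<Longrightarrow> (adj T ^^ hops T r x) x r"
  unfolding hops_def by (metis LeastI_ex rtranclp_power)

lemma hops_le: "(adj T ^^ k) x r \<Longrightarrow> hops T r x \<le> k"
  unfolding hops_def by (rule Least_le)

lemma hops_eq_0_iff: "(adj T)\<^sup>*\<^sup>* x r \<Longrightarrow> hops T r x = 0 \<longleftrightarrow> x = r"
  using relpowp_hops[of T x r] hops_le[where k=0 and T=T and x=x and r=r] by auto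

lemma hops_adj_le: "(adj T)\<^sup>*\<^sup>* z r \<Longrightarrow> adj T x z \<Longrightarrow> hops T r x \<le> Suc (hops T r z)"
  by (meson hops_le relpowp_hops relpowp_Suc_I2)

lemma ex_parent:
  assumes "(adj T)\<^sup>*\<^sup>* x r" "x \<noteq> r"
  shows "\<exists>z. adj T x z \<and> Suc (hops T r z) = hops T r x \<and> (adj T)\<^sup>*\<^sup>* z r"
proof -
  obtain k where k: "hops T r x = Suc k" using assms hops_eq_0_iff not0_implies_Suc by blast
  have "(adj T ^^ Suc k) x r" using relpowp_hops[OF assms(1)] k by simp
  then obtain z where z: "adj T x z" "(adj T ^^ k) z r" using relpowp_Suc_D2 by metis
  have zr: "(adj T)\<^sup>*\<^sup>* z r" using z(2) relpowp_imp_rtranclp by metis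
  have "Suc (hops T r z) = hops T r x"
    using hops_le[OF z(2)] hops_adj_le[OF zr z(1)] k by simp
  then show ?thesis using z zr by blast
qed

definition parent :: "nat set set \<Rightarrow> nat \<Rightarrow> nat \<Rightarrow> nat" where
  "parent T r x = (SOME z. adj T x z \<and> Suc (hops T r z) = hops T r x \<and> (adj T)\<^sup>*\<^sup>* z r)"

lemma parentD:
  assumes "(adj T)\<^sup>*\<^sup>* x r" "x \<noteq> r"
  shows "adj T x (parent T r x)" "Suc (hops T r (parent T r x)) = hops T r x"
    "(adj T)\<^sup>*\<^sup>* (parent T r x) r"
  using someI_ex[OF ex_parent[OF assms]] unfolding parent_def by blast+

lemma connected_on_card_ge:
  assumes p: "graph_on n T" and c: "connected_on n T" and n: "n \<ge> 1"
  shows "n \<le> card T + 1"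
proof -
  let ?V = "{..<n} - {0}"
  have r: "(adj T)\<^sup>*\<^sup>* v 0" if "v < n" for v using c n that unfolding connected_on_def by auto
  have "inj_on (\<lambda>v. {v, parent T 0 v}) ?V"
  proof (rule inj_onI)
    fix x y assume xy: "x \<in> ?V" "y \<in> ?V" "{x, parent T 0 x} = {y, parent T 0 y}"
    show "x = y"
    proof (rule ccontr)
      assume "x \<noteq> y"
      then have "x = parent T 0 y" "y = parent T 0 x" using xy(3) by (auto simp: doubleton_eq_iff)
      moreover have "x < n" "y < n" "x \<noteq> 0" "y \<noteq> 0" using xy(1,2) by auto
      ultimately have "Suc (hops T 0 y) = hops T 0 x" "Suc (hops T 0 x) = hops T 0 y"
        using parentD(2)[OF r] by metis+
      then show False by simp
    qed
  qed
  moreover have "(\<lambda>v. {v, parent T 0 v}) ` ?V \<subseteq> T"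
    using parentD(1)[OF r] unfolding adj_def by auto
  ultimately have "card ?V \<le> card T" using card_inj_on_le graph_on_finite[OF p] by blast
  then show ?thesis using n by simp
qed

lemma hops_parent_iter:
  assumes r: "(adj T)\<^sup>*\<^sup>* x r"
  shows "i \<le> hops T r x \<Longrightarrow>
    (adj T)\<^sup>*\<^sup>* ((parent T r ^^ i) x) r \<and> hops T r ((parent T r ^^ i) x) = hops T r x - i"
proof (induction i)
  case (Suc i)
  then have ih: "(adj T)\<^sup>*\<^sup>* ((parent T r ^^ i) x) r" "hops T r ((parent T r ^^ i) x) = hops T r x - i"
    by auto
  then have "(parent T r ^^ i) x \<noteq> r" using Suc.prems hops_eq_0_iff by fastforce
  then show ?case using parentD(2,3)[OF ih(1)] ih(2) by simp
qed (simp add: r)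

lemma adj_parent_iter:
  assumes r: "(adj T)\<^sup>*\<^sup>* x r" and i: "i < hops T r x"
  shows "adj T ((parent T r ^^ i) x) ((parent T r ^^ Suc i) x)"
proof -
  have "(adj T)\<^sup>*\<^sup>* ((parent T r ^^ i) x) r" "hops T r ((parent T r ^^ i) x) = hops T r x - i"
    using hops_parent_iter[OF r] i by auto
  moreover from this have "(parent T r ^^ i) x \<noteq> r" using i hops_eq_0_iff by fastforce
  ultimately show ?thesis using parentD(1) by simp
qed

text \<open>The cycle closes a shortest path from x to y avoiding the edge {x, y}.\<close>

lemma cycle_if_not_bridge:
  assumes e: "{x, y} \<in> T" and xy: "x \<noteq> y" and c: "(adj (T - {{x, y}}))\<^sup>*\<^sup>* x y"
  shows "\<exists>vs. is_cycle T vs"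
proof -
  define T' where "T' = T - {{x, y}}"
  define k where "k = hops T' y x"
  define zs where "zs i = (parent T' y ^^ i) x" for i
  have cx: "(adj T')\<^sup>*\<^sup>* x y" using c T'_def by simp
  have inv: "hops T' y (zs i) = k - i" if "i \<le> k" for i
    using hops_parent_iter[OF cx] that unfolding zs_def k_def by blast
  have k0: "k \<noteq> 0" using hops_eq_0_iff[OF cx] xy k_def by simp
  have "k \<noteq> 1"
  proof
    assume "k = 1"
    then have "(adj T' ^^ 1) x y" using relpowp_hops[OF cx] k_def by simp
    then show False using T'_def unfolding relpowp_1 adj_def by simp
  qed
  define vs where "vs = map zs [0..<Suc k]"
  have "is_cycle T vs"
    unfolding is_cycle_def
  proof (intro conjI allI impI)
    show "3 \<le> length vs" using k0 \<open>k \<noteq> 1\<close> vs_def by simp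
    have "inj_on zs {0..<Suc k}"
    proof (rule inj_onI)
      fix i j assume "i \<in> {0..<Suc k}" "j \<in> {0..<Suc k}" "zs i = zs j"
      then show "i = j" using inv[of i] inv[of j] by auto
    qed
    then show "distinct vs" unfolding vs_def by (simp add: distinct_map del: upt_Suc)
    fix i assume "Suc i < length vs"
    then show "adj T (vs ! i) (vs ! Suc i)"
      using adj_parent_iter[OF cx, of i] unfolding vs_def zs_def T'_def k_def adj_def
      by (simp del: upt_Suc)
  next
    have "zs k = y" using hops_parent_iter[OF cx, of k] hops_eq_0_iff unfolding zs_def k_def
      by fastforce
    then have "last vs = y" using vs_def by simp
    moreover have "hd vs = x" using vs_def zs_def by (simp del: upt_Suc add: hd_map)
    ultimately show "adj T (last vs) (hd vs)" using e unfolding adj_def by (simp add: insert_commute)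
  qed
  then show ?thesis by blast
qed

section \<open>Trees\<close>

lemma tree_graph_on: "is_tree n T \<Longrightarrow> graph_on n T"
  unfolding is_tree_def graph_on_def by blast

lemma tree_connected_on: "is_tree n T \<Longrightarrow> connected_on n T"
  unfolding is_tree_def connected_on_def by blast

lemma tree_rtranclp_adj: "is_tree n T \<Longrightarrow> u < n \<Longrightarrow> v < n \<Longrightarrow> (adj T)\<^sup>*\<^sup>* u v"
  unfolding is_tree_def by blast

lemma tree_not_rtranclp_remove_edge:
  assumes t: "is_tree n T" and e: "{x, y} \<in> T"
  shows "\<not> (adj (T - {{x, y}}))\<^sup>*\<^sup>* x y"
proof
  assume "(adj (T - {{x, y}}))\<^sup>*\<^sup>* x y"
  moreover have "x \<noteq> y" using graph_on_adjD[OF tree_graph_on[OF t], of x y] e unfolding adj_def by simp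
  ultimately show False using cycle_if_not_bridge[OF e] t unfolding is_tree_def by blast
qed

text \<open>The parent path from z visits only vertices strictly closer to the root than x,
  so it avoids every edge at x.\<close>

lemma rtranclp_root_avoiding:
  assumes p: "graph_on n T" and c: "connected_on n T" and x: "x \<in> e"
  shows "z < n \<Longrightarrow> hops T 0 z \<le> hops T 0 x \<Longrightarrow> z \<noteq> x \<Longrightarrow> (adj (T - {e}))\<^sup>*\<^sup>* z 0"
proof (induction "hops T 0 z" arbitrary: z)
  case 0
  then have "(adj T)\<^sup>*\<^sup>* z 0" using c unfolding connected_on_def by auto
  then show ?case using 0 hops_eq_0_iff by (metis rtranclp.rtrancl_refl)
next
  case (Suc j)
  have cz: "(adj T)\<^sup>*\<^sup>* z 0" using c Suc unfolding connected_on_def by auto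
  have z0: "z \<noteq> 0" using Suc hops_eq_0_iff[OF cz] by simp
  define q where "q = parent T 0 z"
  have a: "adj T z q" and dq: "Suc (hops T 0 q) = hops T 0 z" using parentD[OF cz z0] q_def by auto
  have "q \<noteq> x" using dq Suc.prems by auto
  then have "adj (T - {e}) z q" using a x Suc.prems(3) unfolding adj_def by auto
  moreover have "(adj (T - {e}))\<^sup>*\<^sup>* q 0"
    using Suc.hyps(1)[of q] dq Suc.hyps(2) Suc.prems \<open>q \<noteq> x\<close> graph_on_adjD[OF p a] by simp
  ultimately show ?case by (meson converse_rtranclp_into_rtranclp)
qed

lemma tree_edge_eq_parent_edge:
  assumes t: "is_tree n T" and n: "n \<ge> 1" and e: "{x, y} \<in> T"
    and le: "hops T 0 y \<le> hops T 0 x"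
  shows "x \<noteq> 0 \<and> y = parent T 0 x"
proof -
  have p: "graph_on n T" and c: "connected_on n T" using tree_graph_on tree_connected_on t by auto
  have xy: "x \<noteq> y" "x < n" "y < n" using graph_on_adjD[OF p, of x y] e unfolding adj_def by auto
  have cx: "(adj T)\<^sup>*\<^sup>* x 0" and cy: "(adj T)\<^sup>*\<^sup>* y 0" using c n xy unfolding connected_on_def by auto
  have x0: "x \<noteq> 0" using le xy(1) hops_eq_0_iff[OF cx] hops_eq_0_iff[OF cy] by auto
  define q where "q = parent T 0 x"
  have a: "adj T x q" and dq: "Suc (hops T 0 q) = hops T 0 x" using parentD[OF cx x0] q_def by auto
  have "q = y"
  proof (rule ccontr)
    assume qy: "q \<noteq> y"
    have "q \<noteq> x" "q < n" using graph_on_adjD[OF p a] by auto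
    then have "adj (T - {{x, y}}) x q" using a qy unfolding adj_def by (auto simp: doubleton_eq_iff)
    moreover have "(adj (T - {{x, y}}))\<^sup>*\<^sup>* q 0"
      using rtranclp_root_avoiding[OF p c insertI1 \<open>q < n\<close>] dq \<open>q \<noteq> x\<close> by simp
    moreover have "(adj (T - {{x, y}}))\<^sup>*\<^sup>* 0 y"
      using rtranclp_root_avoiding[OF p c insertI1 xy(3) le] xy(1) rtranclp_adj_sym by simp
    ultimately have "(adj (T - {{x, y}}))\<^sup>*\<^sup>* x y"
      by (meson converse_rtranclp_into_rtranclp rtranclp_trans)
    then show False using tree_not_rtranclp_remove_edge[OF t e] by simp
  qed
  then show ?thesis using x0 q_def by simp
qed

lemma tree_card_edges:
  assumes t: "is_tree n T" and n: "n \<ge> 1"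
  shows "card T + 1 = n"
proof -
  have p: "graph_on n T" using tree_graph_on t .
  have "T \<subseteq> (\<lambda>v. {v, parent T 0 v}) ` ({..<n} - {0})"
  proof
    fix e assume e: "e \<in> T"
    then obtain x y where xy: "e = {x, y}" "x < n" "y < n" using graph_on_edgeE[OF p] by metis
    consider "hops T 0 y \<le> hops T 0 x" | "hops T 0 x \<le> hops T 0 y" by linarith
    then show "e \<in> (\<lambda>v. {v, parent T 0 v}) ` ({..<n} - {0})"
    proof cases
      case 1
      then show ?thesis using tree_edge_eq_parent_edge[OF t n, of x y] e xy by auto
    next
      case 2
      then show ?thesis using tree_edge_eq_parent_edge[OF t n, of y x] e xy
        by (auto simp: insert_commute)
    qed
  qed
  then have "card T \<le> card ((\<lambda>v. {v, parent T 0 v}) ` ({..<n} - {0}))"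
    by (simp add: card_mono)
  also have "\<dots> \<le> n - 1" using card_image_le[of "{..<n} - {0}"] n by simp
  finally show ?thesis
    using connected_on_card_ge[OF p tree_connected_on[OF t] n] n by linarith
qed

lemma cycle_rtranclp_remove_closing_edge:
  assumes cy: "is_cycle T vs"
  shows "i < length vs \<Longrightarrow> (adj (T - {{last vs, hd vs}}))\<^sup>*\<^sup>* (hd vs) (vs ! i)"
proof (induction i)
  case 0
  then show ?case by (simp add: hd_conv_nth)
next
  case (Suc i)
  have l: "length vs \<ge> 3" "distinct vs" and a: "adj T (vs ! i) (vs ! Suc i)"
    using cy Suc.prems unfolding is_cycle_def by auto
  have ne: "vs \<noteq> []" using l(1) by auto
  then have lst: "last vs = vs ! (length vs - 1)" and hd: "hd vs = vs ! 0"
    by (simp_all add: last_conv_nth hd_conv_nth)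
  have idx: "vs ! j = vs ! k \<longleftrightarrow> j = k" if "j < length vs" "k < length vs" for j k
    using nth_eq_iff_index_eq[OF l(2) that] .
  have "{vs ! i, vs ! Suc i} \<noteq> {last vs, hd vs}"
  proof
    assume "{vs ! i, vs ! Suc i} = {last vs, hd vs}"
    then consider "vs ! i = vs ! (length vs - 1)" | "vs ! i = vs ! 0" "vs ! Suc i = vs ! (length vs - 1)"
      unfolding lst hd by (auto simp: doubleton_eq_iff)
    then show False
    proof cases
      case 1
      then show False using idx[of i "length vs - 1"] Suc.prems ne by simp
    next
      case 2
      then show False using idx[of i 0] idx[of "Suc i" "length vs - 1"] Suc.prems l(1) ne by simp
    qed
  qed
  then have "adj (T - {{last vs, hd vs}}) (vs ! i) (vs ! Suc i)" using a unfolding adj_def by simp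
  then show ?case using Suc by (meson Suc_lessD rtranclp.rtrancl_into_rtrancl)
qed

lemma connected_card_edges_acyclic:
  assumes p: "graph_on n T" and c: "connected_on n T" and cd: "card T + 1 = n"
  shows "\<nexists>vs. is_cycle T vs"
proof
  assume "\<exists>vs. is_cycle T vs"
  then obtain vs where cy: "is_cycle T vs" by blast
  define e where "e = {last vs, hd vs}"
  have eT: "e \<in> T" using cy unfolding is_cycle_def adj_def e_def by simp
  have "vs \<noteq> []" using cy unfolding is_cycle_def by auto
  then have fwd: "(adj (T - {e}))\<^sup>*\<^sup>* (hd vs) (last vs)"
    using cycle_rtranclp_remove_closing_edge[OF cy, of "length vs - 1"] e_def
    by (simp add: last_conv_nth)
  have bypass: "(adj (T - {e}))\<^sup>*\<^sup>* x y" if "adj T x y" for x y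
  proof (cases "{x, y} = e")
    case True
    then have "x = hd vs \<and> y = last vs \<or> x = last vs \<and> y = hd vs"
      unfolding e_def by (auto simp: doubleton_eq_iff)
    then show ?thesis using fwd rtranclp_adj_sym by blast
  next
    case False
    then show ?thesis using that unfolding adj_def by auto
  qed
  have "connected_on n (T - {e})"
    using c rtranclp_adj_map[of T "T - {e}" id] bypass unfolding connected_on_def by simp
  moreover have "graph_on n (T - {e})" using p unfolding graph_on_def by auto
  ultimately have "n \<le> card (T - {e}) + 1" using connected_on_card_ge cd by simp
  moreover have "card (T - {e}) + 1 = card T" using eT graph_on_finite[OF p]
    by (metis card_Suc_Diff1 Suc_eq_plus1)
  ultimately show False using cd by simp
qed

lemma is_tree_iff_card_edges:
  assumes "n \<ge> 1"
  shows "is_tree n T \<longleftrightarrow> graph_on n T \<and> connected_on n T \<and> card T + 1 = n"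
proof
  assume "is_tree n T"
  then show "graph_on n T \<and> connected_on n T \<and> card T + 1 = n"
    using tree_graph_on tree_connected_on tree_card_edges assms by blast
next
  assume h: "graph_on n T \<and> connected_on n T \<and> card T + 1 = n"
  then have "\<nexists>vs. is_cycle T vs" using connected_card_edges_acyclic by blast
  then show "is_tree n T" using h unfolding is_tree_def graph_on_def connected_on_def by blast
qed

lemma tree_degree_pos:
  assumes t: "is_tree n T" and n: "n \<ge> 2" and v: "v < n"
  shows "degree T v \<ge> 1"
proof -
  obtain u where u: "u < n" "u \<noteq> v" using n v by (metis less_2_cases_iff less_le_trans not_less_eq)
  then obtain z where "adj T v z"
    using tree_rtranclp_adj[OF t v u(1)] by (metis converse_rtranclpE)
  then have "neighbours T v \<noteq> {}" using mem_neighbours_iff by blast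
  then show ?thesis unfolding degree_def
    using finite_neighbours[OF tree_graph_on[OF t]] by (simp add: Suc_leI card_gt_0_iff)
qed

text \<open>Degrees are positive and sum to 2n - 2.\<close>

lemma tree_card_degree_le:
  assumes t: "is_tree n T" and n: "n \<ge> 2" and d: "d \<ge> 1"
  shows "(d - 1) * n + 2 \<le> d * card {v. v < n \<and> degree T v \<le> d}"
proof -
  let ?A = "{v. v < n \<and> degree T v \<le> d}" and ?B = "{v. v < n \<and> \<not> degree T v \<le> d}"
  obtain d' where d': "d = Suc d'" using d by (cases d) auto
  have fin: "finite ?A" "finite ?B" and disj: "?A \<inter> ?B = {}" and un: "{..<n} = ?A \<union> ?B" by auto
  have card_AB: "card ?A + card ?B = n" using card_Un_disjoint[OF fin disj] un by (metis card_lessThan)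
  have "(\<Sum>v\<in>?A. 1) \<le> (\<Sum>v\<in>?A. degree T v)"
    using tree_degree_pos[OF t n] by (intro sum_mono) auto
  moreover have "(\<Sum>v\<in>?B. d + 1) \<le> (\<Sum>v\<in>?B. degree T v)"
    by (intro sum_mono) auto
  moreover have "2 * card T = (\<Sum>v\<in>?A \<union> ?B. degree T v)"
    using sum_degree[OF tree_graph_on[OF t]] by (simp only: un)
  then have "2 * card T = (\<Sum>v\<in>?A. degree T v) + (\<Sum>v\<in>?B. degree T v)"
    by (simp only: sum.union_disjoint[OF fin disj])
  moreover have "card T + 1 = n" using tree_card_edges t n by simp
  ultimately have "card ?A + (d' + 2) * card ?B + 2 \<le> 2 * n" using d' by (simp add: algebra_simps; linarith)
  then have "d' * card ?B + 2 \<le> card ?A" using card_AB by (simp add: algebra_simps)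
  moreover have "d' * n = d' * card ?A + d' * card ?B" using card_AB by (metis distrib_left)
  ultimately show ?thesis using d' by simp
qed

lemma tree_no_triangle:
  assumes t: "is_tree n T" and ab: "neighbours T s = {a, b}" "a \<noteq> b"
  shows "{a, b} \<notin> T"
proof
  assume ab': "{a, b} \<in> T"
  have sa: "{s, a} \<in> T" "{s, b} \<in> T" using ab(1) unfolding neighbours_def by auto
  have "s \<noteq> a" using graph_on_adjD[OF tree_graph_on[OF t], of s a] sa unfolding adj_def by auto
  then have "adj (T - {{s, b}}) s a" "adj (T - {{s, b}}) a b"
    using sa ab' ab(2) unfolding adj_def by (auto simp: doubleton_eq_iff)
  then have "(adj (T - {{s, b}}))\<^sup>*\<^sup>* s b" by (meson r_into_rtranclp rtranclp_trans)
  then show False using tree_not_rtranclp_remove_edge[OF t sa(2)] by simp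
qed

lemma finite_trees: "finite (trees n)"
proof (rule finite_subset)
  show "trees n \<subseteq> Pow (Pow {..<n})"
    unfolding trees_def by (auto dest!: tree_graph_on elim!: graph_on_edgeE)
qed simp

lemma star_is_tree:
  assumes n: "n \<ge> 1"
  shows "is_tree n ((\<lambda>v. {0, v}) ` {1..<n})"
proof -
  let ?T = "(\<lambda>v. {0, v}) ` {1..<n}"
  have "graph_on n ?T" unfolding graph_on_def using n by fastforce
  moreover have "connected_on n ?T"
  proof (rule connected_onI)
    fix v assume "v < n"
    then show "(adj ?T)\<^sup>*\<^sup>* v 0"
      by (cases "v = 0") (auto simp: adj_def insert_commute intro!: r_into_rtranclp)
  qed
  moreover have "inj_on (\<lambda>v. {0::nat, v}) {1..<n}" by (rule inj_onI) (auto simp: doubleton_eq_iff)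
  then have "card ?T + 1 = n" using n by (simp add: card_image)
  ultimately show ?thesis using is_tree_iff_card_edges[OF n] by simp
qed

lemma card_trees_pos: "n \<ge> 1 \<Longrightarrow> card (trees n) > 0"
  using star_is_tree finite_trees unfolding trees_def by (metis card_gt_0_iff empty_iff mem_Collect_eq)

section \<open>Moving a vertex of degree at most two onto a leaf position\<close>

text \<open>The switching move of the counting argument: a vertex s of degree one or two is cut
  out of T (its two neighbours, if any, are joined instead) and hung as a leaf on w.\<close>

definition reattach :: "nat set set \<Rightarrow> nat \<Rightarrow> nat \<Rightarrow> nat set set" where
  "reattach T w s = (T - {e \<in> T. s \<in> e}) \<union> {{s, w}}
     \<union> (if degree T s = 2 then {neighbours T s} else {})"

definition reattachable :: "nat \<Rightarrow> nat set set \<Rightarrow> nat \<Rightarrow> nat set" where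
  "reattachable n T w = {s. s < n \<and> 1 \<le> degree T s \<and> degree T s \<le> 2 \<and> s \<noteq> w \<and> \<not> adj T s w}"

text \<open>Given the old neighbourhood N of s, this undoes the move.\<close>

definition restore :: "nat set set \<Rightarrow> nat \<Rightarrow> nat \<Rightarrow> nat set \<Rightarrow> nat set set" where
  "restore T' w s N = (T' - {{s, w}} - {N}) \<union> ((\<lambda>x. {s, x}) ` N)"

lemma reattachableD:
  "s \<in> reattachable n T w \<Longrightarrow> s < n \<and> 1 \<le> degree T s \<and> degree T s \<le> 2 \<and> s \<noteq> w \<and> \<not> adj T s w"
  unfolding reattachable_def by simp

lemma reattach_graph_on:
  assumes p: "graph_on n T" and w: "w < n" and s: "s \<in> reattachable n T w"
  shows "graph_on n (reattach T w s)"
proof -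
  have "graph_on n (T - {e \<in> T. s \<in> e})" using p unfolding graph_on_def by auto
  moreover have "graph_on n {{s, w}}" using reattachableD[OF s] w unfolding graph_on_def by auto
  moreover have "graph_on n (if degree T s = 2 then {neighbours T s} else {})"
  proof (cases "degree T s = 2")
    case True
    then obtain a b where "neighbours T s = {a, b}" "a \<noteq> b" "a < n" "b < n"
      using neighbours_eq_doubletonE[OF p] by metis
    then show ?thesis using True unfolding graph_on_def by auto
  qed (simp add: graph_on_def)
  ultimately show ?thesis unfolding reattach_def using graph_on_Un by metis
qed

lemma card_reattach:
  assumes t: "is_tree n T" and s: "s \<in> reattachable n T w"
  shows "card (reattach T w s) = card T"
proof -
  have p: "graph_on n T" using tree_graph_on[OF t] .
  let ?E = "{e \<in> T. s \<in> e}"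
  have fT: "finite T" using graph_on_finite[OF p] .
  have cE: "card ?E = degree T s" "card ?E \<le> card T"
    using card_edges_containing[OF p] card_mono[OF fT, of ?E] by auto
  have cTE: "card (T - ?E) = card T - degree T s" using cE fT by (simp add: card_Diff_subset)
  have sw: "{s, w} \<notin> T - ?E" by simp
  show ?thesis
  proof (cases "degree T s = 2")
    case True
    then obtain a b where ab: "neighbours T s = {a, b}" "a \<noteq> b" "a \<noteq> s" "b \<noteq> s"
      using neighbours_eq_doubletonE[OF p] by metis
    then have "neighbours T s \<notin> (T - ?E) \<union> {{s, w}}"
      using tree_no_triangle[OF t ab(1,2)] by (auto simp: doubleton_eq_iff)
    then show ?thesis using True cTE cE sw fT unfolding reattach_def by (simp add: card_insert_if)
  next
    case False
    then have "degree T s = 1" using reattachableD[OF s] by simp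
    then show ?thesis using False cTE cE sw fT unfolding reattach_def by (simp add: card_insert_if)
  qed
qed

text \<open>Contracting s onto one of its neighbours a0 maps every edge of T to a walk in the new graph.\<close>

lemma rtranclp_reattach_contract:
  assumes p: "graph_on n T" and s: "s \<in> reattachable n T w" and a0: "a0 \<in> neighbours T s"
    and a: "adj T x y"
  defines "f \<equiv> \<lambda>z. if z = s then a0 else z"
  shows "(adj (reattach T w s))\<^sup>*\<^sup>* (f x) (f y)"
proof -
  let ?T' = "reattach T w s"
  have a0_walk: "(adj ?T')\<^sup>*\<^sup>* a0 y" if y: "y \<in> neighbours T s" for y
  proof (cases "y = a0")
    case False
    have sub: "{a0, y} \<subseteq> neighbours T s" and c2: "card {a0, y} = 2" using a0 y False by auto
    then have "degree T s = 2"
      using card_mono[OF finite_neighbours[OF p] sub] reattachableD[OF s] unfolding degree_def by simp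
    moreover then have "neighbours T s = {a0, y}"
      using card_subset_eq[OF finite_neighbours[OF p] sub] c2 unfolding degree_def by simp
    ultimately have "adj ?T' a0 y" unfolding adj_def reattach_def by simp
    then show ?thesis by simp
  qed simp
  consider "x = s" | "y = s" | "x \<noteq> s" "y \<noteq> s" by blast
  then show ?thesis
  proof cases
    case 1
    then show ?thesis using a a0_walk graph_on_adjD[OF p a] mem_neighbours_iff f_def by auto
  next
    case 2
    then show ?thesis using a a0_walk graph_on_adjD[OF p a] mem_neighbours_iff f_def adj_commute
        rtranclp_adj_sym by metis
  next
    case 3
    then show ?thesis using a f_def unfolding adj_def reattach_def by auto
  qed
qed

lemma reattach_connected_on:
  assumes p: "graph_on n T" and c: "connected_on n T" and w: "w < n"
    and s: "s \<in> reattachable n T w"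
  shows "connected_on n (reattach T w s)"
proof (rule connected_onI)
  let ?T' = "reattach T w s"
  have sn: "s \<noteq> w" "1 \<le> degree T s" using reattachableD[OF s] by auto
  then have "neighbours T s \<noteq> {}" unfolding degree_def by (metis card.empty not_one_le_zero)
  then obtain a0 where a0: "a0 \<in> neighbours T s" by blast
  fix u assume u: "u < n"
  show "(adj ?T')\<^sup>*\<^sup>* u w"
  proof (cases "u = s")
    case True
    then have "adj ?T' u w" unfolding adj_def reattach_def by simp
    then show ?thesis by simp
  next
    case False
    define f where "f z = (if z = s then a0 else z)" for z
    have "(adj T)\<^sup>*\<^sup>* u w" using c u w unfolding connected_on_def by blast
    moreover have "(adj ?T')\<^sup>*\<^sup>* (f x) (f y)" if "adj T x y" for x y
      using rtranclp_reattach_contract[OF p s a0 that] unfolding f_def .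
    ultimately have "(adj ?T')\<^sup>*\<^sup>* (f u) (f w)" using rtranclp_adj_map[of T ?T' f u w] by blast
    then show ?thesis using False sn(1) f_def by simp
  qed
qed

lemma reattach_is_tree:
  assumes t: "is_tree n T" and n: "n \<ge> 2" and w: "w < n" and s: "s \<in> reattachable n T w"
  shows "is_tree n (reattach T w s)"
  using reattach_graph_on[OF tree_graph_on[OF t] w s]
    reattach_connected_on[OF tree_graph_on[OF t] tree_connected_on[OF t] w s]
    card_reattach[OF t s] tree_card_edges[OF t] is_tree_iff_card_edges n by simp

lemma restore_reattach:
  assumes t: "is_tree n T" and s: "s \<in> reattachable n T w"
  shows "restore (reattach T w s) w s (neighbours T s) = T"
proof -
  have p: "graph_on n T" using tree_graph_on[OF t] .
  let ?E = "{e \<in> T. s \<in> e}"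
  have "neighbours T s \<notin> T - ?E"
  proof (cases "degree T s = 2")
    case True
    then obtain a b where "neighbours T s = {a, b}" "a \<noteq> b"
      using neighbours_eq_doubletonE[OF p] by metis
    then show ?thesis using tree_no_triangle[OF t] by simp
  next
    case False
    then have "degree T s = 1" using reattachableD[OF s] by simp
    then obtain a where "neighbours T s = {a}" using neighbours_eq_singletonE[OF p] by metis
    then show ?thesis by (auto elim: graph_on_edgeE[OF p] simp: doubleton_eq_iff)
  qed
  then have "reattach T w s - {{s, w}} - {neighbours T s} = T - ?E"
    unfolding reattach_def by auto
  moreover have "(\<lambda>x. {s, x}) ` neighbours T s = ?E" using edges_containing[OF p] by simp
  ultimately show ?thesis unfolding restore_def by auto
qed

lemma neighbours_mem_restore_choices:
  assumes t: "is_tree n T" and s: "s \<in> reattachable n T w"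
  shows "neighbours T s \<in> (\<lambda>a. {a}) ` {..<n} \<union> reattach T w s"
proof (cases "degree T s = 2")
  case False
  then have "degree T s = 1" using reattachableD[OF s] by simp
  then obtain a where "neighbours T s = {a}" "a < n"
    using neighbours_eq_singletonE[OF tree_graph_on[OF t]] by metis
  then show ?thesis by simp
qed (simp add: reattach_def)

lemma neighbours_reattach_target:
  assumes s: "s \<in> reattachable n T w"
  shows "neighbours (reattach T w s) w \<subseteq> insert s (neighbours T w)"
proof
  fix y assume "y \<in> neighbours (reattach T w s) w"
  moreover have "w \<notin> neighbours T s" using reattachableD[OF s] mem_neighbours_iff by metis
  ultimately have "{w, y} \<in> T \<or> {w, y} = {s, w}" unfolding reattach_def neighbours_def
    by (auto split: if_splits)
  then show "y \<in> insert s (neighbours T w)" unfolding neighbours_def by (auto simp: doubleton_eq_iff)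
qed

lemma neighbours_reattach_self:
  assumes p: "graph_on n T"
  shows "neighbours (reattach T w s) s = {w}"
proof -
  have "s \<notin> neighbours T s" using not_mem_neighbours_self[OF p] .
  then have "{s, y} \<in> reattach T w s \<longleftrightarrow> y = w" for y
    unfolding reattach_def by (auto simp: doubleton_eq_iff split: if_splits)
  then show ?thesis unfolding neighbours_def by auto
qed

lemma neighbours_reattach_leaf:
  assumes p: "graph_on n T" and s: "s \<in> reattachable n T w" and t: "neighbours T x = {w}"
  shows "neighbours (reattach T w s) x = {w}"
proof -
  have sw: "s \<noteq> w" "\<not> adj T s w" using reattachableD[OF s] by auto
  have xs: "x \<noteq> s" using t sw mem_neighbours_iff adj_commute by (metis singletonI)
  have xw: "x \<noteq> w" using t not_mem_neighbours_self[OF p] by auto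
  have "x \<notin> neighbours T s" using t sw mem_neighbours_iff adj_commute by (metis singletonD)
  then have "{s, x} \<notin> T" "{x, s} \<notin> T" unfolding neighbours_def by (auto simp: insert_commute)
  then have "{x, y} \<in> reattach T w s \<longleftrightarrow> {x, y} \<in> T" for y
    using xs xw sw \<open>x \<notin> neighbours T s\<close> unfolding reattach_def
    by (auto simp: doubleton_eq_iff split: if_splits)
  then show ?thesis using t unfolding neighbours_def by auto
qed

lemma card_sym_diff_reattach:
  assumes p: "graph_on n T" and s: "s \<in> reattachable n T w"
  shows "card (sym_diff T (reattach T w s)) \<le> 4"
proof -
  let ?E = "{e \<in> T. s \<in> e}" and ?X = "{{s, w}} \<union> (if degree T s = 2 then {neighbours T s} else {})"
  have "sym_diff T (reattach T w s) \<subseteq> ?E \<union> ?X" unfolding reattach_def by auto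
  then have "card (sym_diff T (reattach T w s)) \<le> card (?E \<union> ?X)"
    using graph_on_finite[OF p] by (intro card_mono) auto
  also have "\<dots> \<le> card ?E + card ?X" by (rule card_Un_le)
  also have "card ?X \<le> 2" by (auto simp: card_insert_if)
  also have "card ?E \<le> 2" using card_edges_containing[OF p] reattachableD[OF s] by simp
  finally show ?thesis by simp
qed

section \<open>Hubs: vertices carrying many pendant leaves\<close>

definition pendants :: "nat set set \<Rightarrow> nat \<Rightarrow> nat set" where
  "pendants T r = {x. adj T r x \<and> degree T x = 1}"

definition hubs :: "nat \<Rightarrow> nat \<Rightarrow> nat set set \<Rightarrow> nat set" where
  "hubs m n T = {r. r < n \<and> m \<le> card (pendants T r)}"

lemma pendants_subset_neighbours: "pendants T r \<subseteq> neighbours T r"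
  unfolding pendants_def neighbours_def adj_def by blast

lemma finite_pendants: "graph_on n T \<Longrightarrow> finite (pendants T r)"
  by (rule finite_subset[OF pendants_subset_neighbours finite_neighbours])

lemma mem_pendants_iff: "x \<in> pendants T r \<longleftrightarrow> neighbours T x = {r}"
proof
  assume x: "x \<in> pendants T r"
  then have "adj T x r" using adj_commute[of T r x] unfolding pendants_def by simp
  then have "r \<in> neighbours T x" unfolding mem_neighbours_iff .
  moreover have "card (neighbours T x) = 1" using x unfolding pendants_def degree_def by simp
  then obtain z where "neighbours T x = {z}" by (rule card_1_singletonE)
  ultimately show "neighbours T x = {r}" by simp
next
  assume x: "neighbours T x = {r}"
  then have "adj T x r" unfolding mem_neighbours_iff[symmetric] by simp
  then have "adj T r x" using adj_commute[of T x r] by simp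
  then show "x \<in> pendants T r" unfolding pendants_def degree_def using x by simp
qed

lemma hub_touches_sym_diff:
  assumes p0: "graph_on n T0" and no_hubs: "hubs m n T0 = {}" and r: "r \<in> hubs m n T"
  shows "r \<in> \<Union>(sym_diff T T0) \<or> (\<exists>x \<in> \<Union>(sym_diff T T0). neighbours T x = {r})"
proof -
  have "card (pendants T0 r) < m" "m \<le> card (pendants T r)"
    using no_hubs r unfolding hubs_def by auto
  then have "\<not> pendants T r \<subseteq> pendants T0 r"
    using card_mono[OF finite_pendants[OF p0]] by (meson leD le_trans)
  then obtain x where "x \<in> pendants T r" "x \<notin> pendants T0 r" by blast
  then have x: "neighbours T x = {r}" "neighbours T0 x \<noteq> {r}" unfolding mem_pendants_iff .
  show ?thesis
  proof (cases "{x, r} \<in> T0")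
    case False
    then have "{x, r} \<in> sym_diff T T0" using x(1) unfolding neighbours_def by auto
    then show ?thesis by blast
  next
    case True
    then obtain y where "y \<in> neighbours T x \<and> y \<notin> neighbours T0 x \<or> y \<in> neighbours T0 x \<and> y \<notin> neighbours T x"
      using x by blast
    then have "{x, y} \<in> sym_diff T T0" unfolding neighbours_def by auto
    then show ?thesis using x(1) by blast
  qed
qed

lemma card_hubs_le:
  assumes p0: "graph_on n T0" and p: "graph_on n T" and no_hubs: "hubs m n T0 = {}"
  shows "card (hubs m n T) \<le> 4 * card (sym_diff T T0)"
proof -
  define P where "P = \<Union>(sym_diff T T0)"
  define g where "g x = (SOME r. neighbours T x = {r})" for x
  have fD: "finite (sym_diff T T0)" using graph_on_finite p p0 by blast
  have two: "card e = 2" if "e \<in> sym_diff T T0" for e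
    using that graph_on_edgeE[OF p] graph_on_edgeE[OF p0] by (metis DiffE UnE card_2_iff)
  have fP: "finite P" unfolding P_def using fD two by (metis card.infinite finite_Union zero_neq_numeral)
  have "card P \<le> (\<Sum>e\<in>sym_diff T T0. card e)" unfolding P_def by (rule card_Union_le_sum_card)
  then have cP: "card P \<le> 2 * card (sym_diff T T0)" using two by simp
  have "hubs m n T \<subseteq> P \<union> g ` P"
  proof
    fix r assume "r \<in> hubs m n T"
    then have "r \<in> P \<or> (\<exists>x \<in> P. neighbours T x = {r})"
      using hub_touches_sym_diff[OF p0 no_hubs] unfolding P_def by blast
    moreover have "g x = r" if "neighbours T x = {r}" for x unfolding g_def that by simp
    ultimately show "r \<in> P \<union> g ` P" by blast
  qed
  then have "card (hubs m n T) \<le> card (P \<union> g ` P)" using fP by (simp add: card_mono)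
  also have "\<dots> \<le> card P + card P" using card_Un_le card_image_le[OF fP] by (metis add_left_mono le_trans)
  finally show ?thesis using cP by simp
qed

lemma not_mem_pendants_if_reattachable: "s \<in> reattachable n T w \<Longrightarrow> s \<notin> pendants T w"
  using reattachableD adj_commute unfolding pendants_def by blast

lemma insert_subset_pendants_reattach:
  assumes p: "graph_on n T" and s: "s \<in> reattachable n T w" and S: "S \<subseteq> pendants T w"
  shows "insert s S \<subseteq> pendants (reattach T w s) w"
  using S neighbours_reattach_self[OF p] neighbours_reattach_leaf[OF p s]
  unfolding mem_pendants_iff subset_iff by auto

lemma degree_reattach_target:
  assumes p: "graph_on n T" and s: "s \<in> reattachable n T w"
  shows "degree (reattach T w s) w \<le> Suc (degree T w)"
proof -
  have "degree (reattach T w s) w \<le> card (insert s (neighbours T w))"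
    unfolding degree_def using neighbours_reattach_target[OF s] finite_neighbours[OF p]
    by (simp add: card_mono)
  also have "\<dots> \<le> Suc (degree T w)" unfolding degree_def by (simp add: card_insert_le_m1 card_insert_if)
  finally show ?thesis .
qed

section \<open>Almost every tree has a hub\<close>

lemma card_sym_diff_triangle:
  assumes "finite A" "finite B" "finite C"
  shows "card (sym_diff A C) \<le> card (sym_diff A B) + card (sym_diff B C)"
proof -
  have "card (sym_diff A C) \<le> card (sym_diff A B \<union> sym_diff B C)"
    using assms by (intro card_mono) auto
  also have "\<dots> \<le> card (sym_diff A B) + card (sym_diff B C)" by (rule card_Un_le)
  finally show ?thesis .
qed

lemma double_counting_le:
  assumes "finite A" "finite B"
    and "\<And>x. x \<in> A \<Longrightarrow> a \<le> card {y \<in> B. R x y}"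
    and "\<And>y. y \<in> B \<Longrightarrow> card {x \<in> A. R x y} \<le> b"
  shows "card A * a \<le> card B * b"
proof -
  have "card A * a \<le> (\<Sum>x\<in>A. card {y \<in> B. R x y})"
    using sum_mono[of A "\<lambda>_. a"] assms(3) by simp
  also have "\<dots> = (\<Sum>x\<in>A. \<Sum>y\<in>B. if R x y then 1 else 0)"
    using assms(2) by (simp add: sum.inter_filter[symmetric])
  also have "\<dots> = (\<Sum>y\<in>B. \<Sum>x\<in>A. if R x y then 1 else 0)" by (rule sum.swap)
  also have "\<dots> = (\<Sum>y\<in>B. card {x \<in> A. R x y})"
    using assms(1) by (simp add: sum.inter_filter[symmetric])
  also have "\<dots> \<le> card B * b" using sum_mono[of B _ "\<lambda>_. b"] assms(4) by simp
  finally show ?thesis .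
qed

text \<open>A configuration (T, w, S) records a tree T, the vertex w receiving the moved vertices and
  the set S of vertices moved so far; level i consists of the configurations reached by i moves
  from a hub-free tree with w of degree at most four.\<close>

type_synonym config = "nat set set \<times> nat \<times> nat set"

definition move :: "nat \<Rightarrow> config \<Rightarrow> config \<Rightarrow> bool" where
  "move n x y \<longleftrightarrow> (\<exists>T w S s. x = (T, w, S) \<and> s \<in> reattachable n T w
     \<and> y = (reattach T w s, w, insert s S))"

fun configs :: "nat \<Rightarrow> nat \<Rightarrow> nat \<Rightarrow> config set" where
  "configs m n 0 = {(T, w, S). is_tree n T \<and> hubs m n T = {} \<and> w < n \<and> degree T w \<le> 4 \<and> S = {}}"
| "configs m n (Suc i) = {y. \<exists>x \<in> configs m n i. move n x y}"

definition config_invariant :: "nat \<Rightarrow> nat \<Rightarrow> nat \<Rightarrow> nat set set \<Rightarrow> nat \<Rightarrow> nat set \<Rightarrow> bool" where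
  "config_invariant m n i T w S \<longleftrightarrow> is_tree n T \<and> w < n \<and> S \<subseteq> pendants T w \<and> finite S
     \<and> card S = i \<and> degree T w \<le> 4 + i
     \<and> (\<exists>T0. is_tree n T0 \<and> hubs m n T0 = {} \<and> card (sym_diff T T0) \<le> 4 * i)"

lemma config_invariant_reattach:
  assumes n: "n \<ge> 2" and I: "config_invariant m n i T w S" and s: "s \<in> reattachable n T w"
  shows "config_invariant m n (Suc i) (reattach T w s) w (insert s S)"
proof -
  let ?T' = "reattach T w s"
  obtain T0 where t: "is_tree n T" and w: "w < n" and S: "S \<subseteq> pendants T w" "finite S" "card S = i"
    and d: "degree T w \<le> 4 + i"
    and T0: "is_tree n T0" "hubs m n T0 = {}" "card (sym_diff T T0) \<le> 4 * i"
    using I unfolding config_invariant_def by blast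
  have p: "graph_on n T" using tree_graph_on[OF t] .
  have t': "is_tree n ?T'" using reattach_is_tree[OF t n w s] .
  have "s \<notin> S" using S(1) not_mem_pendants_if_reattachable[OF s] by blast
  then have card_S: "card (insert s S) = Suc i" using S by simp
  have "card (sym_diff ?T' T0) \<le> card (sym_diff ?T' T) + card (sym_diff T T0)"
    using graph_on_finite tree_graph_on t t' T0(1) by (meson card_sym_diff_triangle)
  also have "card (sym_diff ?T' T) \<le> 4" using card_sym_diff_reattach[OF p s] by (simp add: Un_commute)
  finally have "card (sym_diff ?T' T0) \<le> 4 * Suc i" using T0(3) by simp
  then show ?thesis unfolding config_invariant_def
    using t' w insert_subset_pendants_reattach[OF p s S(1)] S(2) card_S
      degree_reattach_target[OF p s] d T0(1,2) by auto
qed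

lemma configs_invariant:
  assumes n: "n \<ge> 2"
  shows "(T, w, S) \<in> configs m n i \<Longrightarrow> config_invariant m n i T w S"
proof (induction i arbitrary: T w S)
  case 0
  then show ?case unfolding config_invariant_def by auto
next
  case (Suc i)
  then obtain x where "x \<in> configs m n i" "move n x (T, w, S)" by auto
  then obtain T1 S1 s where "(T1, w, S1) \<in> configs m n i" "s \<in> reattachable n T1 w"
    and "T = reattach T1 w s" "S = insert s S1"
    unfolding move_def by blast
  then show ?case using Suc.IH config_invariant_reattach[OF n] by blast
qed

lemma finite_configs:
  assumes n: "n \<ge> 2"
  shows "finite (configs m n i)"
proof (rule finite_subset)
  show "configs m n i \<subseteq> trees n \<times> {..<n} \<times> Pow {..<n}"
  proof
    fix x assume x: "x \<in> configs m n i"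
    obtain T w S where xx: "x = (T, w, S)" by (cases x) auto
    then have I: "config_invariant m n i T w S" using configs_invariant[OF n] x by blast
    then have "S \<subseteq> neighbours T w" "graph_on n T"
      using pendants_subset_neighbours tree_graph_on unfolding config_invariant_def by blast+
    then show "x \<in> trees n \<times> {..<n} \<times> Pow {..<n}"
      using I xx neighbours_subset unfolding config_invariant_def trees_def by fastforce
  qed
qed (simp add: finite_trees)

lemma card_reattachable_ge:
  assumes n: "n \<ge> 2" and t: "is_tree n T" and w: "w < n" and d: "degree T w \<le> 4 + i" and i: "i < m"
  shows "(n + 2) div 2 - (m + 4) \<le> card (reattachable n T w)"
proof -
  let ?D = "{v. v < n \<and> degree T v \<le> 2}" and ?X = "insert w (neighbours T w)"
  have p: "graph_on n T" using tree_graph_on[OF t] .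
  have fX: "finite ?X" using finite_neighbours[OF p] by simp
  have "?D - ?X \<subseteq> reattachable n T w"
    using tree_degree_pos[OF t n] unfolding reattachable_def
    by (auto simp: mem_neighbours_iff adj_commute)
  then have "card (?D - ?X) \<le> card (reattachable n T w)"
    by (rule card_mono[rotated]) (simp add: reattachable_def)
  moreover have "card ?D - card ?X \<le> card (?D - ?X)" using fX by (rule diff_card_le_card_Diff)
  moreover have "card ?X \<le> m + 4"
    using d i finite_neighbours[OF p] unfolding degree_def by (simp add: card_insert_if)
  moreover have "(n + 2) div 2 \<le> card ?D" using tree_card_degree_le[OF t n, of 2] by simp
  ultimately show ?thesis by linarith
qed

lemma card_moves_from_ge:
  assumes n: "n \<ge> 2" and i: "i < m" and x: "x \<in> configs m n i"
  shows "(n + 2) div 2 - (m + 4) \<le> card {y \<in> configs m n (Suc i). move n x y}"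
proof -
  obtain T w S where xx: "x = (T, w, S)" by (cases x) auto
  then have I: "config_invariant m n i T w S" using configs_invariant[OF n] x by blast
  then have t: "is_tree n T" and w: "w < n" and S: "S \<subseteq> pendants T w" and d: "degree T w \<le> 4 + i"
    unfolding config_invariant_def by auto
  let ?F = "\<lambda>s. (reattach T w s, w, insert s S)"
  have "inj_on ?F (reattachable n T w)"
  proof (rule inj_onI)
    fix s s' assume "s \<in> reattachable n T w" "s' \<in> reattachable n T w" "?F s = ?F s'"
    then have "s \<notin> S" "insert s S = insert s' S"
      using S not_mem_pendants_if_reattachable by auto
    then show "s = s'" by blast
  qed
  then have "card (reattachable n T w) = card (?F ` reattachable n T w)" by (simp add: card_image)
  also have "\<dots> \<le> card {y \<in> configs m n (Suc i). move n x y}"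
  proof (rule card_mono)
    show "finite {y \<in> configs m n (Suc i). move n x y}"
      using finite_configs[OF n, of m "Suc i"] by (simp del: configs.simps)
    have "move n x (?F s)" if "s \<in> reattachable n T w" for s
      unfolding xx move_def using that by blast
    then show "?F ` reattachable n T w \<subseteq> {y \<in> configs m n (Suc i). move n x y}"
      using x by auto
  qed
  finally show ?thesis using card_reattachable_ge[OF n t w d i] by simp
qed

text \<open>A move into (T', w, S') is determined by the moved vertex s \<in> S' and by its old
  neighbourhood, which is either a single vertex or the edge of T' that bridged s.\<close>

lemma card_moves_into_le:
  assumes n: "n \<ge> 2" and i: "i < m" and y: "y \<in> configs m n (Suc i)"
  shows "card {x \<in> configs m n i. move n x y} \<le> m * (2 * n)"
proof -
  obtain T' w S' where yy: "y = (T', w, S')" by (cases y) auto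
  then have I: "config_invariant m n (Suc i) T' w S'" using configs_invariant[OF n] y by blast
  then have t': "is_tree n T'" and S': "finite S'" "card S' = Suc i"
    unfolding config_invariant_def by auto
  define Ns where "Ns = (\<lambda>a. {a}) ` {..<n} \<union> T'"
  define F where "F = (\<lambda>(s, N). (restore T' w s N, w, S' - {s}))"
  have "{x \<in> configs m n i. move n x y} \<subseteq> F ` (S' \<times> Ns)"
  proof
    fix x assume "x \<in> {x \<in> configs m n i. move n x y}"
    then obtain T S s where x: "x = (T, w, S)" "x \<in> configs m n i" "s \<in> reattachable n T w"
      and e: "T' = reattach T w s" "S' = insert s S" unfolding move_def yy by auto
    have t: "is_tree n T" and "S \<subseteq> pendants T w"
      using configs_invariant[OF n] x(1,2) unfolding config_invariant_def by auto
    then have "S = S' - {s}" using e(2) not_mem_pendants_if_reattachable[OF x(3)] by auto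
    moreover have "restore T' w s (neighbours T s) = T" using restore_reattach[OF t x(3)] e(1) by simp
    ultimately have "x = F (s, neighbours T s)" unfolding F_def x(1) by simp
    moreover have "(s, neighbours T s) \<in> S' \<times> Ns"
      using neighbours_mem_restore_choices[OF t x(3)] e unfolding Ns_def by simp
    ultimately show "x \<in> F ` (S' \<times> Ns)" by blast
  qed
  moreover have fNs: "finite Ns" unfolding Ns_def using graph_on_finite tree_graph_on t' by blast
  ultimately have "card {x \<in> configs m n i. move n x y} \<le> card (F ` (S' \<times> Ns))"
    using S' by (intro card_mono) auto
  also have "\<dots> \<le> card (S' \<times> Ns)" using S' fNs by (intro card_image_le) simp
  also have "\<dots> = card S' * card Ns" by (rule card_cartesian_product)
  also have "\<dots> \<le> m * (2 * n)"
  proof (rule mult_le_mono)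
    have "card Ns \<le> card ((\<lambda>a. {a}) ` {..<n}) + card T'" unfolding Ns_def by (rule card_Un_le)
    also have "\<dots> \<le> n + card T'" using card_image_le[of "{..<n}" "\<lambda>a. {a}"] by simp
    finally show "card Ns \<le> 2 * n" using tree_card_edges[OF t'] n by simp
  qed (use S'(2) i in simp)
  finally show ?thesis .
qed

lemma card_configs_pow_le:
  assumes n: "n \<ge> 2"
  shows "i \<le> m \<Longrightarrow> card (configs m n 0) * ((n + 2) div 2 - (m + 4)) ^ i
           \<le> card (configs m n i) * (m * (2 * n)) ^ i"
proof (induction i)
  case (Suc i)
  let ?a = "(n + 2) div 2 - (m + 4)" and ?b = "m * (2 * n)"
  have "card (configs m n i) * ?a \<le> card (configs m n (Suc i)) * ?b"
    using Suc.prems card_moves_from_ge[OF n] card_moves_into_le[OF n] finite_configs[OF n]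
    by (intro double_counting_le[where R = "move n"]) (auto simp del: configs.simps)
  have "card (configs m n 0) * ?a ^ Suc i = (card (configs m n 0) * ?a ^ i) * ?a"
    by (simp only: power_Suc ac_simps)
  also have "\<dots> \<le> (card (configs m n i) * ?b ^ i) * ?a"
    using Suc by (intro mult_le_mono1) simp
  also have "\<dots> = (card (configs m n i) * ?a) * ?b ^ i" by (simp only: ac_simps)
  also have "\<dots> \<le> (card (configs m n (Suc i)) * ?b) * ?b ^ i"
    using \<open>card (configs m n i) * ?a \<le> _\<close> by (rule mult_le_mono1)
  also have "\<dots> = card (configs m n (Suc i)) * ?b ^ Suc i" by (simp only: power_Suc ac_simps)
  finally show ?case .
qed simp

lemma card_hubless_le_card_configs_0:
  assumes n: "n \<ge> 2"
  shows "card {T. is_tree n T \<and> hubs m n T = {}} * n \<le> 2 * card (configs m n 0)"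
proof -
  let ?B = "{T. is_tree n T \<and> hubs m n T = {}}" and ?W = "\<lambda>T. {w. w < n \<and> degree T w \<le> 4}"
  have fB: "finite ?B" using finite_trees unfolding trees_def by (rule rev_finite_subset) auto
  have "configs m n 0 = (\<lambda>(T, w). (T, w, {})) ` Sigma ?B ?W" by auto
  moreover have "inj_on (\<lambda>(T, w). (T, w, {} :: nat set)) (Sigma ?B ?W)" by (rule inj_onI) auto
  ultimately have "card (configs m n 0) = (\<Sum>T\<in>?B. card (?W T))"
    using fB by (simp add: card_image del: configs.simps)
  moreover have "n \<le> 2 * card (?W T)" if "T \<in> ?B" for T
    using tree_card_degree_le[of n T 4] that n by simp
  ultimately show ?thesis
    using sum_mono[of ?B "\<lambda>_. n" "\<lambda>T. 2 * card (?W T)"] by (simp add: sum_distrib_left)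
qed

text \<open>After m moves, w is a hub of a tree within 4m edges of a hub-free tree, and such a tree
  has at most 16m hubs.\<close>

lemma configs_final_subset:
  assumes n: "n \<ge> 2"
  shows "configs m n m \<subseteq> (SIGMA T:{T. is_tree n T \<and> hubs m n T \<noteq> {} \<and> card (hubs m n T) \<le> 16 * m}.
           SIGMA w:{w \<in> hubs m n T. degree T w \<le> 4 + m}. Pow (neighbours T w))" (is "_ \<subseteq> ?Z")
proof
  fix x assume x: "x \<in> configs m n m"
  obtain T w S where xx: "x = (T, w, S)" by (cases x) auto
  then obtain T0 where t: "is_tree n T" and w: "w < n" and S: "S \<subseteq> pendants T w" "card S = m"
    and d: "degree T w \<le> 4 + m"
    and T0: "is_tree n T0" "hubs m n T0 = {}" "card (sym_diff T T0) \<le> 4 * m"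
    using configs_invariant[OF n] x unfolding config_invariant_def by blast
  have p: "graph_on n T" using tree_graph_on[OF t] .
  have "m \<le> card (pendants T w)" using S card_mono[OF finite_pendants[OF p]] by metis
  then have "w \<in> hubs m n T" unfolding hubs_def using w by simp
  moreover have "card (hubs m n T) \<le> 16 * m"
    using card_hubs_le[OF tree_graph_on[OF T0(1)] p T0(2)] T0(3) by simp
  moreover have "S \<subseteq> neighbours T w" using S pendants_subset_neighbours by blast
  ultimately show "x \<in> ?Z" using xx t d by auto
qed

lemma card_configs_final_le:
  assumes n: "n \<ge> 2"
  shows "card (configs m n m) \<le> card {T. is_tree n T \<and> hubs m n T \<noteq> {}} * (16 * m * 2 ^ (4 + m))"
proof -
  let ?G = "{T. is_tree n T \<and> hubs m n T \<noteq> {}}"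
  let ?G' = "{T. is_tree n T \<and> hubs m n T \<noteq> {} \<and> card (hubs m n T) \<le> 16 * m}"
  let ?W = "\<lambda>T. {w \<in> hubs m n T. degree T w \<le> 4 + m}"
  have fG: "finite ?G" "finite ?G'" using finite_trees unfolding trees_def
    by (auto intro: rev_finite_subset)
  have fW: "finite (?W T)" for T unfolding hubs_def by simp
  have fN: "finite (neighbours T w)" if "T \<in> ?G'" for T w
    using that finite_neighbours tree_graph_on by blast
  have "finite (SIGMA T:?G'. SIGMA w:?W T. Pow (neighbours T w))"
    using fG(2) fW fN by (intro finite_SigmaI) auto
  then have "card (configs m n m) \<le> card (SIGMA T:?G'. SIGMA w:?W T. Pow (neighbours T w))"
    using configs_final_subset[OF n] by (rule card_mono)
  also have "\<dots> = (\<Sum>T\<in>?G'. \<Sum>w\<in>?W T. 2 ^ degree T w)"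
    using fG fW fN by (simp add: card_Pow degree_def)
  also have "\<dots> \<le> (\<Sum>T\<in>?G'. \<Sum>w\<in>?W T. 2 ^ (4 + m))"
    by (intro sum_mono power_increasing) auto
  also have "\<dots> \<le> (\<Sum>T\<in>?G'. 16 * m * 2 ^ (4 + m))"
  proof (intro sum_mono)
    fix T assume "T \<in> ?G'"
    moreover have "card (?W T) \<le> card (hubs m n T)" by (rule card_mono) (auto simp: hubs_def)
    ultimately have "card (?W T) \<le> 16 * m" by simp
    then show "(\<Sum>w\<in>?W T. 2 ^ (4 + m)) \<le> 16 * m * 2 ^ (4 + m)" by simp
  qed
  also have "\<dots> \<le> card ?G * (16 * m * 2 ^ (4 + m))"
    using card_mono[OF fG(1), of ?G'] by (simp add: mult_le_mono1 subset_iff)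
  finally show ?thesis .
qed

lemma card_hubless_trees_le:
  assumes n: "4 * m + 16 \<le> n"
  shows "card {T. is_tree n T \<and> hubs m n T = {}} * n
           \<le> (2 * (16 * m * 2 ^ (4 + m)) * (8 * m) ^ m) * card {T. is_tree n T \<and> hubs m n T \<noteq> {}}"
proof -
  let ?a = "(n + 2) div 2 - (m + 4)" and ?b = "m * (2 * n)"
  let ?B = "card {T. is_tree n T \<and> hubs m n T = {}}" and ?G = "card {T. is_tree n T \<and> hubs m n T \<noteq> {}}"
  let ?K = "16 * m * 2 ^ (4 + m)"
  have n2: "n \<ge> 2" using n by simp
  have "?B * n * ?a ^ m \<le> 2 * (card (configs m n 0) * ?a ^ m)"
    using card_hubless_le_card_configs_0[OF n2] by (simp add: mult_le_mono1)
  also have "\<dots> \<le> 2 * (card (configs m n m) * ?b ^ m)" using card_configs_pow_le[OF n2] by simp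
  also have "\<dots> \<le> 2 * (?G * ?K * ?b ^ m)"
    using card_configs_final_le[OF n2] by (intro mult_le_mono2 mult_le_mono1) simp
  finally have main: "?B * n * ?a ^ m \<le> 2 * (?G * ?K * ?b ^ m)" .
  have "?B * n * n ^ m \<le> ?B * n * (4 * ?a) ^ m"
    using n by (intro mult_le_mono2 power_mono) linarith+
  also have "\<dots> = (?B * n * ?a ^ m) * 4 ^ m" by (simp add: power_mult_distrib)
  also have "\<dots> \<le> 2 * (?G * ?K * ?b ^ m) * 4 ^ m" using main by (rule mult_le_mono1)
  also have "\<dots> = (2 * ?K * (8 * m) ^ m * ?G) * n ^ m"
    using power_mult_distrib[of "2::nat" 4 m, symmetric] by (simp add: power_mult_distrib)
  finally show ?thesis using n by simp
qed

lemma card_trees_with_hub_ge: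
  assumes n: "4 * m + 16 \<le> n"
  defines "C \<equiv> real (2 * (16 * m * 2 ^ (4 + m)) * (8 * m) ^ m)"
  shows "1 - C / real n \<le> real (card {T \<in> trees n. hubs m n T \<noteq> {}}) / real (card (trees n))"
proof -
  let ?B = "{T. is_tree n T \<and> hubs m n T = {}}" and ?G = "{T \<in> trees n. hubs m n T \<noteq> {}}"
  have fin: "finite ?B" "finite ?G" using finite_trees unfolding trees_def
    by (auto intro: rev_finite_subset)
  have "trees n = ?B \<union> ?G" "?B \<inter> ?G = {}" unfolding trees_def by auto
  then have tot: "real (card (trees n)) = real (card ?B) + real (card ?G)"
    using card_Un_disjoint[OF fin] by simp
  have pos: "real (card (trees n)) > 0" using card_trees_pos n by simp
  have "real (card ?B) * real n \<le> C * real (card ?G)"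
    using card_hubless_trees_le[OF n] unfolding C_def trees_def
    by (simp only: of_nat_mult[symmetric] of_nat_le_iff) simp
  also have "\<dots> \<le> C * real (card (trees n))" using tot unfolding C_def by (intro mult_left_mono) auto
  finally have "real (card ?B) / real (card (trees n)) \<le> C / real n"
    using pos n by (simp add: field_simps)
  then show ?thesis using tot pos by (simp add: diff_divide_distrib[symmetric] field_simps)
qed

lemma almost_all_trees_if_hub:
  assumes P: "\<And>n T. is_tree n T \<Longrightarrow> hubs m n T \<noteq> {} \<Longrightarrow> P n T"
  shows "almost_all_trees P"
proof -
  define C where "C = real (2 * (16 * m * 2 ^ (4 + m)) * (8 * m) ^ m)"
  define f where "f n = real (card {T \<in> trees n. P n T}) / real (card (trees n))" for n
  have "1 - C / real n \<le> f n" if n: "n \<ge> 4 * m + 16" for n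
  proof -
    have "card {T \<in> trees n. hubs m n T \<noteq> {}} \<le> card {T \<in> trees n. P n T}"
      using P finite_trees unfolding trees_def by (intro card_mono) auto
    then show ?thesis using card_trees_with_hub_ge[OF n] unfolding f_def C_def
      by (smt (verit) divide_right_mono of_nat_0_le_iff of_nat_mono)
  qed
  then have lower: "\<forall>\<^sub>F n in sequentially. 1 - C / real n \<le> f n" by (rule eventually_sequentiallyI)
  have upper: "f n \<le> 1" for n
  proof -
    have "card {T \<in> trees n. P n T} \<le> card (trees n)" using finite_trees by (intro card_mono) auto
    then show ?thesis unfolding f_def by (cases "card (trees n) = 0") (simp_all add: divide_le_eq_1)
  qed
  have "(\<lambda>n. 1 - C / real n) \<longlonglongrightarrow> 1"
    using tendsto_diff[OF tendsto_const lim_const_over_n[of C]] by simp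
  from tendsto_sandwich[OF lower _ this tendsto_const] have "f \<longlonglongrightarrow> 1"
    by (simp add: upper)
  then show ?thesis unfolding almost_all_trees_def f_def .
qed

section \<open>Sedentary vertices from kernel vectors\<close>

definition mat_vec :: "nat \<Rightarrow> (nat \<Rightarrow> nat \<Rightarrow> real) \<Rightarrow> (nat \<Rightarrow> real) \<Rightarrow> nat \<Rightarrow> real" where
  "mat_vec n A x i = (\<Sum>j<n. A i j * x j)"

definition dotp :: "nat \<Rightarrow> (nat \<Rightarrow> real) \<Rightarrow> (nat \<Rightarrow> real) \<Rightarrow> real" where
  "dotp n x y = (\<Sum>i<n. x i * y i)"

definition norm1 :: "nat \<Rightarrow> (nat \<Rightarrow> real) \<Rightarrow> real" where
  "norm1 n x = (\<Sum>j<n. \<bar>x j\<bar>)"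

definition mat_norm1 :: "nat \<Rightarrow> (nat \<Rightarrow> nat \<Rightarrow> real) \<Rightarrow> real" where
  "mat_norm1 n A = (\<Sum>i<n. \<Sum>j<n. \<bar>A i j\<bar>)"

definition exp_coeff :: "real \<Rightarrow> nat \<Rightarrow> complex" where
  "exp_coeff t k = (\<i> * complex_of_real t) ^ k / of_nat (fact k)"

definition exp_vec :: "nat \<Rightarrow> (nat \<Rightarrow> nat \<Rightarrow> real) \<Rightarrow> real \<Rightarrow> (nat \<Rightarrow> real) \<Rightarrow> nat \<Rightarrow> complex" where
  "exp_vec n A t q i = (\<Sum>k. exp_coeff t k * complex_of_real ((mat_vec n A ^^ k) q i))"

lemma dotp_mat_vec_sym:
  assumes sym: "\<And>i j. A i j = A j i"
  shows "dotp n x (mat_vec n A y) = dotp n (mat_vec n A x) y"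
proof -
  have "dotp n x (mat_vec n A y) = (\<Sum>i<n. \<Sum>j<n. x i * A i j * y j)"
    unfolding dotp_def mat_vec_def by (simp add: sum_distrib_left mult.assoc)
  also have "\<dots> = (\<Sum>j<n. \<Sum>i<n. A j i * x i * y j)"
    by (subst sum.swap) (simp add: sym mult_ac)
  also have "\<dots> = dotp n (mat_vec n A x) y"
    unfolding dotp_def mat_vec_def by (simp add: sum_distrib_right)
  finally show ?thesis .
qed

lemma dotp_mat_vec_pow_sym:
  assumes sym: "\<And>i j. A i j = A j i"
  shows "dotp n x ((mat_vec n A ^^ k) y) = dotp n ((mat_vec n A ^^ k) x) y"
proof (induction k arbitrary: x y)
  case (Suc k)
  have "dotp n x ((mat_vec n A ^^ Suc k) y) = dotp n x ((mat_vec n A ^^ k) (mat_vec n A y))"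
    by (simp only: funpow_Suc_right o_apply)
  also have "\<dots> = dotp n (mat_vec n A ((mat_vec n A ^^ k) x)) y"
    using Suc.IH dotp_mat_vec_sym[OF sym] by simp
  finally show ?case by simp
qed simp

lemma mat_vec_add: "mat_vec n A (\<lambda>j. x j + y j) = (\<lambda>i. mat_vec n A x i + mat_vec n A y i)"
  unfolding mat_vec_def by (simp add: distrib_left sum.distrib)

lemma mat_vec_pow_add:
  "(mat_vec n A ^^ k) (\<lambda>j. x j + y j) = (\<lambda>i. (mat_vec n A ^^ k) x i + (mat_vec n A ^^ k) y i)"
  by (induction k) (simp_all add: mat_vec_add)

lemma mat_vec_pow_zero: "(mat_vec n A ^^ k) (\<lambda>j. 0) = (\<lambda>i. 0)"
  by (induction k) (simp_all add: mat_vec_def)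

lemma dotp_add_left: "dotp n (\<lambda>j. x j + y j) z = dotp n x z + dotp n y z"
  unfolding dotp_def by (simp add: distrib_right sum.distrib)

lemma dotp_unit_left:
  assumes "u < n"
  shows "dotp n (\<lambda>j. if j = u then 1 else 0) z = z u"
proof -
  have "dotp n (\<lambda>j. if j = u then 1 else 0) z = (\<Sum>j<n. if j = u then z j else 0)"
    unfolding dotp_def by (rule sum.cong) auto
  then show ?thesis using assms by (simp add: sum.delta)
qed

lemma abs_le_norm1: "i < n \<Longrightarrow> \<bar>x i\<bar> \<le> norm1 n x"
  unfolding norm1_def by (rule member_le_sum) auto

lemma norm1_mat_vec_pow_le: "norm1 n ((mat_vec n A ^^ k) x) \<le> mat_norm1 n A ^ k * norm1 n x"
proof (induction k)
  case (Suc k)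
  have step: "norm1 n (mat_vec n A y) \<le> mat_norm1 n A * norm1 n y" for y
  proof -
    have "norm1 n (mat_vec n A y) \<le> (\<Sum>i<n. \<Sum>j<n. \<bar>A i j\<bar> * norm1 n y)"
      unfolding norm1_def mat_vec_def
      by (intro sum_mono order.trans[OF sum_abs]) (auto simp: abs_mult intro: mult_left_mono abs_le_norm1[unfolded norm1_def])
    then show ?thesis unfolding mat_norm1_def by (simp add: sum_distrib_right)
  qed
  have "mat_norm1 n A \<ge> 0" unfolding mat_norm1_def by (simp add: sum_nonneg)
  then show ?case using step[of "(mat_vec n A ^^ k) x"] Suc mult_left_mono by (fastforce simp: mult.assoc)
qed simp

lemma summable_norm_exp_coeff_mat_vec:
  assumes "i < n"
  shows "summable (\<lambda>k. norm (exp_coeff t k * complex_of_real ((mat_vec n A ^^ k) x i)))"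
proof (rule summable_comparison_test'[where N = 0])
  let ?K = "\<bar>t\<bar> * mat_norm1 n A"
  show "summable (\<lambda>k. norm1 n x * (inverse (fact k) * ?K ^ k))"
    by (intro summable_mult summable_exp)
  fix k :: nat
  have "norm (norm (exp_coeff t k * complex_of_real ((mat_vec n A ^^ k) x i)))
        = \<bar>t\<bar> ^ k / fact k * \<bar>(mat_vec n A ^^ k) x i\<bar>"
    unfolding exp_coeff_def by (simp add: norm_mult norm_divide norm_power)
  also have "\<dots> \<le> \<bar>t\<bar> ^ k / fact k * (mat_norm1 n A ^ k * norm1 n x)"
    using abs_le_norm1[OF assms, of "(mat_vec n A ^^ k) x"] norm1_mat_vec_pow_le[where n=n and A=A and k=k and x=x]
    by (intro mult_left_mono) auto
  also have "\<dots> = norm1 n x * (inverse (fact k) * ?K ^ k)"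
    by (simp add: power_mult_distrib field_simps)
  finally show "norm (norm (exp_coeff t k * complex_of_real ((mat_vec n A ^^ k) x i)))
      \<le> norm1 n x * (inverse (fact k) * ?K ^ k)" .
qed

lemma exp_vec_sums:
  "i < n \<Longrightarrow> (\<lambda>k. exp_coeff t k * complex_of_real ((mat_vec n A ^^ k) q i)) sums exp_vec n A t q i"
  unfolding exp_vec_def
  by (rule summable_sums[OF summable_norm_cancel[OF summable_norm_exp_coeff_mat_vec]])

text \<open>Coefficientwise, exp(itx) exp(-itx) = 1.\<close>

lemma exp_coeff_convolution:
  "(\<Sum>k\<le>N. exp_coeff t k * cnj (exp_coeff t (N - k))) = (if N = 0 then 1 else 0)"
proof -
  let ?x = "\<i> * complex_of_real t"
  have "exp_coeff t k = ?x ^ k /\<^sub>R fact k" "cnj (exp_coeff t k) = (- ?x) ^ k /\<^sub>R fact k" for k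
    unfolding exp_coeff_def by (simp_all add: scaleR_conv_of_real divide_inverse_commute)
  then have "(\<Sum>k\<le>N. exp_coeff t k * cnj (exp_coeff t (N - k)))
      = (\<Sum>k\<le>N. (?x ^ k /\<^sub>R fact k) * ((- ?x) ^ (N - k) /\<^sub>R fact (N - k)))"
    by simp
  also have "\<dots> = (?x + - ?x) ^ N /\<^sub>R fact N"
    using exp_series_add_commuting[of ?x "- ?x" N] by simp
  finally show ?thesis by simp
qed

lemma dotp_mat_vec_pow_pow:
  assumes sym: "\<And>i j. A i j = A j i"
  shows "dotp n ((mat_vec n A ^^ k) q) ((mat_vec n A ^^ j) q) = dotp n q ((mat_vec n A ^^ (k + j)) q)"
  using dotp_mat_vec_pow_sym[OF sym, where n=n and x=q and k=k and y="(mat_vec n A ^^ j) q"]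
  by (simp add: funpow_add)

lemma exp_vec_convolution:
  assumes sym: "\<And>i j. A i j = A j i"
  shows "(\<Sum>i<n. \<Sum>k\<le>N. exp_coeff t k * complex_of_real ((mat_vec n A ^^ k) q i)
            * cnj (exp_coeff t (N - k) * complex_of_real ((mat_vec n A ^^ (N - k)) q i)))
         = (if N = 0 then complex_of_real (dotp n q q) else 0)"
proof -
  let ?v = "\<lambda>k. (mat_vec n A ^^ k) q"
  have "(\<Sum>i<n. exp_coeff t k * complex_of_real (?v k i) * cnj (exp_coeff t (N - k) * complex_of_real (?v (N - k) i)))
      = exp_coeff t k * cnj (exp_coeff t (N - k)) * complex_of_real (dotp n q (?v N))"
    if "k \<le> N" for k
  proof -
    have "dotp n (?v k) (?v (N - k)) = dotp n q (?v N)"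
      using dotp_mat_vec_pow_pow[OF sym] that by simp
    moreover have "(\<Sum>i<n. exp_coeff t k * complex_of_real (?v k i)
        * cnj (exp_coeff t (N - k) * complex_of_real (?v (N - k) i)))
      = exp_coeff t k * cnj (exp_coeff t (N - k)) * complex_of_real (dotp n (?v k) (?v (N - k)))"
      unfolding dotp_def by (simp add: sum_distrib_left mult_ac)
    ultimately show ?thesis by simp
  qed
  then have "(\<Sum>i<n. \<Sum>k\<le>N. exp_coeff t k * complex_of_real (?v k i) * cnj (exp_coeff t (N - k) * complex_of_real (?v (N - k) i)))
      = (\<Sum>k\<le>N. exp_coeff t k * cnj (exp_coeff t (N - k))) * complex_of_real (dotp n q (?v N))"
    by (subst sum.swap) (simp add: sum_distrib_right)
  then show ?thesis by (simp add: exp_coeff_convolution)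
qed

lemma sum_cmod_exp_vec_sq:
  assumes sym: "\<And>i j. A i j = A j i"
  shows "(\<Sum>i<n. (cmod (exp_vec n A t q i))\<^sup>2) = dotp n q q"
proof -
  define a where "a i k = exp_coeff t k * complex_of_real ((mat_vec n A ^^ k) q i)" for i k
  have "(\<lambda>N. \<Sum>k\<le>N. a i k * cnj (a i (N - k))) sums (exp_vec n A t q i * cnj (exp_vec n A t q i))"
    if i: "i < n" for i
  proof -
    have sa: "summable (\<lambda>k. norm (a i k))"
      using summable_norm_exp_coeff_mat_vec[OF i] unfolding a_def .
    then have sb: "summable (\<lambda>k. norm (cnj (a i k)))" by (simp only: complex_mod_cnj)
    have "a i sums exp_vec n A t q i" unfolding a_def by (rule exp_vec_sums[OF i])
    then have "suminf (a i) = exp_vec n A t q i" "suminf (\<lambda>k. cnj (a i k)) = cnj (exp_vec n A t q i)"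
      using sums_cnj sums_unique by (metis)+
    then show ?thesis using Cauchy_product_sums[OF sa sb] by simp
  qed
  then have "(\<lambda>N. \<Sum>i<n. \<Sum>k\<le>N. a i k * cnj (a i (N - k)))
      sums (\<Sum>i<n. exp_vec n A t q i * cnj (exp_vec n A t q i))"
    by (intro sums_sum) simp
  moreover have "(\<lambda>N. \<Sum>i<n. \<Sum>k\<le>N. a i k * cnj (a i (N - k))) sums complex_of_real (dotp n q q)"
    unfolding a_def exp_vec_convolution[OF sym] by (rule sums_single)
  ultimately have "(\<Sum>i<n. exp_vec n A t q i * cnj (exp_vec n A t q i)) = complex_of_real (dotp n q q)"
    using sums_unique2 by blast
  then have "complex_of_real (\<Sum>i<n. (cmod (exp_vec n A t q i))\<^sup>2) = complex_of_real (dotp n q q)"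
    by (simp only: of_real_sum complex_norm_square)
  then show ?thesis using of_real_eq_iff by blast
qed

lemma quadratic_form_exp_sums:
  "(\<lambda>k. exp_coeff t k * complex_of_real (dotp n q ((mat_vec n A ^^ k) q)))
     sums (\<Sum>i<n. complex_of_real (q i) * exp_vec n A t q i)"
proof -
  have "(\<lambda>k. \<Sum>i<n. complex_of_real (q i) * (exp_coeff t k * complex_of_real ((mat_vec n A ^^ k) q i)))
      sums (\<Sum>i<n. complex_of_real (q i) * exp_vec n A t q i)"
    using exp_vec_sums by (intro sums_sum sums_mult) simp
  then show ?thesis unfolding dotp_def by (simp add: sum_distrib_left mult_ac)
qed

lemma cmod_quadratic_form_exp_le:
  assumes sym: "\<And>i j. A i j = A j i"
  shows "cmod (\<Sum>i<n. complex_of_real (q i) * exp_vec n A t q i) \<le> dotp n q q"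
proof -
  have "cmod (\<Sum>i<n. complex_of_real (q i) * exp_vec n A t q i) \<le> (\<Sum>i<n. \<bar>q i\<bar> * cmod (exp_vec n A t q i))"
    by (rule order.trans[OF norm_sum]) (simp add: norm_mult)
  also have "\<dots> \<le> (\<Sum>i<n. ((q i)\<^sup>2 + (cmod (exp_vec n A t q i))\<^sup>2) / 2)"
  proof (rule sum_mono)
    fix i
    have "0 \<le> (\<bar>q i\<bar> - cmod (exp_vec n A t q i))\<^sup>2" by simp
    then show "\<bar>q i\<bar> * cmod (exp_vec n A t q i) \<le> ((q i)\<^sup>2 + (cmod (exp_vec n A t q i))\<^sup>2) / 2"
      by (simp add: power2_eq_square algebra_simps)
  qed
  also have "\<dots> = dotp n q q"
    using sum_cmod_exp_vec_sq[OF sym, where n=n and t=t and q=q] unfolding dotp_def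
    by (simp add: sum_divide_distrib[symmetric] sum.distrib power2_eq_square)
  finally show ?thesis .
qed

lemma mpow_mat_vec:
  assumes u: "u < n"
  shows "(\<Sum>j<n. mpow n (\<lambda>i j. complex_of_real (A i j)) k u j * complex_of_real (x j))
         = complex_of_real ((mat_vec n A ^^ k) x u)"
proof (induction k arbitrary: x)
  case 0
  have "(\<Sum>j<n. (if u = j then 1 else 0) * complex_of_real (x j))
      = (\<Sum>j<n. if u = j then complex_of_real (x j) else 0)" by (rule sum.cong) auto
  then show ?case using u by (simp add: sum.delta')
next
  case (Suc k)
  let ?B = "\<lambda>i j. complex_of_real (A i j)"
  have "(\<Sum>j<n. mpow n ?B (Suc k) u j * complex_of_real (x j))
      = (\<Sum>j<n. \<Sum>l<n. mpow n ?B k u l * ?B l j * complex_of_real (x j))"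
    by (simp add: sum_distrib_right)
  also have "\<dots> = (\<Sum>l<n. \<Sum>j<n. mpow n ?B k u l * ?B l j * complex_of_real (x j))"
    by (rule sum.swap)
  also have "\<dots> = (\<Sum>l<n. mpow n ?B k u l * complex_of_real (mat_vec n A x l))"
    unfolding mat_vec_def by (simp add: sum_distrib_left mult.assoc)
  also have "\<dots> = complex_of_real ((mat_vec n A ^^ Suc k) x u)"
    using Suc.IH by (simp only: funpow_Suc_right o_apply)
  finally show ?case .
qed

lemma diag_mat_vec_pow_eq:
  assumes sym: "\<And>i j. A i j = A j i" and u: "u < n"
    and ker: "mat_vec n A (\<lambda>j. (if j = u then 1 else 0) - q j) = (\<lambda>i. 0)"
  shows "(mat_vec n A ^^ k) (\<lambda>j. if j = u then 1 else 0) u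
           = dotp n q ((mat_vec n A ^^ k) q) + (if k = 0 then 1 - dotp n q q else 0)"
proof (cases k)
  case 0
  then show ?thesis by simp
next
  case (Suc k')
  define p where "p j = (if j = u then 1 else 0) - q j" for j
  have e: "(\<lambda>j. if j = u then 1 else 0) = (\<lambda>j. p j + q j)" unfolding p_def by auto
  have Ap: "(mat_vec n A ^^ k) p = (\<lambda>i. 0)"
    using ker mat_vec_pow_zero unfolding Suc p_def by (simp only: funpow_Suc_right o_apply)
  have "(mat_vec n A ^^ k) (\<lambda>j. if j = u then 1 else 0) u
      = dotp n (\<lambda>j. if j = u then 1 else 0) ((mat_vec n A ^^ k) (\<lambda>j. p j + q j))"
    using dotp_unit_left[OF u] e by simp
  also have "\<dots> = dotp n p ((mat_vec n A ^^ k) q) + dotp n q ((mat_vec n A ^^ k) q)"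
    unfolding e mat_vec_pow_add Ap by (simp add: dotp_add_left)
  also have "dotp n p ((mat_vec n A ^^ k) q) = 0"
    using dotp_mat_vec_pow_sym[OF sym] Ap unfolding dotp_def by simp
  finally show ?thesis using Suc by simp
qed

lemma U_diag_eq:
  assumes sym: "\<And>i j. A i j = A j i" and u: "u < n"
    and ker: "mat_vec n A (\<lambda>j. (if j = u then 1 else 0) - q j) = (\<lambda>i. 0)"
  shows "U n A t u u = complex_of_real (1 - dotp n q q) + (\<Sum>i<n. complex_of_real (q i) * exp_vec n A t q i)"
proof -
  have "mpow n (\<lambda>i j. complex_of_real (A i j)) k u u
      = complex_of_real ((mat_vec n A ^^ k) (\<lambda>j. if j = u then 1 else 0) u)" for k
    using mpow_mat_vec[OF u, of A k "\<lambda>j. if j = u then 1 else 0"] u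
    by (simp add: if_distrib sum.delta cong: if_cong)
  then have "(\<i> * complex_of_real t) ^ k / of_nat (fact k) * mpow n (\<lambda>i j. complex_of_real (A i j)) k u u
      = exp_coeff t k * complex_of_real (dotp n q ((mat_vec n A ^^ k) q))
        + (if k = 0 then complex_of_real (1 - dotp n q q) else 0)" for k
    unfolding exp_coeff_def diag_mat_vec_pow_eq[OF sym u ker] by (simp add: distrib_left)
  moreover have "(\<lambda>k. exp_coeff t k * complex_of_real (dotp n q ((mat_vec n A ^^ k) q))
        + (if k = 0 then complex_of_real (1 - dotp n q q) else 0))
      sums ((\<Sum>i<n. complex_of_real (q i) * exp_vec n A t q i) + complex_of_real (1 - dotp n q q))"
    by (intro sums_add quadratic_form_exp_sums sums_single)
  ultimately have "(\<lambda>k. (\<i> * complex_of_real t) ^ k / of_nat (fact k)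
        * mpow n (\<lambda>i j. complex_of_real (A i j)) k u u)
      sums ((\<Sum>i<n. complex_of_real (q i) * exp_vec n A t q i) + complex_of_real (1 - dotp n q q))"
    by simp
  then show ?thesis unfolding U_def by (simp add: sums_unique[symmetric] add.commute)
qed

lemma sedentary_if_kernel_split:
  assumes sym: "\<And>i j. A i j = A j i" and u: "u < n"
    and ker: "mat_vec n A (\<lambda>j. (if j = u then 1 else 0) - q j) = (\<lambda>i. 0)"
    and small: "2 * dotp n q q < 1"
  shows "sedentary n A u"
proof -
  have G0: "0 \<le> dotp n q q" unfolding dotp_def by (simp add: sum_nonneg)
  have "1 - 2 * dotp n q q \<le> cmod (U n A t u u)" for t
  proof -
    let ?c = "complex_of_real (1 - dotp n q q)"
      and ?\<phi> = "\<Sum>i<n. complex_of_real (q i) * exp_vec n A t q i"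
    have "cmod ?c = 1 - dotp n q q" using small G0 by (simp only: norm_of_real)
    moreover have "cmod ?c - cmod ?\<phi> \<le> cmod (U n A t u u)"
      using U_diag_eq[OF sym u ker, of t] norm_diff_ineq[of ?c ?\<phi>] by simp
    moreover have "cmod ?\<phi> \<le> dotp n q q"
      using cmod_quadratic_form_exp_le[where A=A, OF sym] .
    ultimately show ?thesis by linarith
  qed
  then have "1 - 2 * dotp n q q \<le> (INF t\<in>{0<..}. cmod (U n A t u u))"
    by (intro cINF_greatest) auto
  then show ?thesis unfolding sedentary_def using small G0 by (intro exI[of _ "1 - 2 * dotp n q q"]) auto
qed

section \<open>Sedentary pendant vertices\<close>

lemma wadj_sym: "wadj T w i j = wadj T w j i"
  unfolding wadj_def by (simp add: insert_commute)

text \<open>The orthogonal projection of the unit vector at u onto the vector of weights of the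
  pendant edges at r. Pendants are seen only by row r of the adjacency matrix, so the unit
  vector minus this projection lies in its kernel.\<close>

definition pendant_proj :: "nat set set \<Rightarrow> (nat set \<Rightarrow> real) \<Rightarrow> nat \<Rightarrow> nat \<Rightarrow> nat \<Rightarrow> real" where
  "pendant_proj T w r u j = (if j \<in> pendants T r
     then w {r, u} * w {r, j} / (\<Sum>l\<in>pendants T r. (w {r, l})\<^sup>2) else 0)"

lemma pendants_subset: "graph_on n T \<Longrightarrow> pendants T r \<subseteq> {..<n}"
  using pendants_subset_neighbours neighbours_subset by blast

lemma wadj_pendant: "j \<in> pendants T r \<Longrightarrow> wadj T w i j = (if i = r then w {r, j} else 0)"
  unfolding mem_pendants_iff wadj_def neighbours_def by (auto simp: insert_commute)

lemma mat_vec_wadj_pendant_kernel: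
  assumes p: "graph_on n T" and u: "u \<in> pendants T r"
    and S: "(\<Sum>l\<in>pendants T r. (w {r, l})\<^sup>2) \<noteq> 0"
  shows "mat_vec n (wadj T w) (\<lambda>j. (if j = u then 1 else 0) - pendant_proj T w r u j) = (\<lambda>i. 0)"
proof
  fix i
  let ?F = "pendants T r" and ?S = "\<Sum>l\<in>pendants T r. (w {r, l})\<^sup>2"
  let ?x = "\<lambda>j. (if j = u then 1 else 0) - pendant_proj T w r u j"
  have fF: "finite ?F" using finite_pendants[OF p] .
  have "mat_vec n (wadj T w) ?x i = (\<Sum>j\<in>?F. wadj T w i j * ?x j)"
    unfolding mat_vec_def using pendants_subset[OF p] u
    by (intro sum.mono_neutral_right) (auto simp: pendant_proj_def)
  also have "\<dots> = (if i = r then (\<Sum>j\<in>?F. w {r, j} * ?x j) else 0)"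
    by (simp add: wadj_pendant cong: sum.cong)
  also have "(\<Sum>j\<in>?F. w {r, j} * ?x j)
      = (\<Sum>j\<in>?F. if j = u then w {r, j} else 0) - w {r, u} / ?S * (\<Sum>j\<in>?F. (w {r, j})\<^sup>2)"
    unfolding pendant_proj_def sum_distrib_left sum_subtractf[symmetric]
    by (intro sum.cong) (auto simp: power2_eq_square field_simps)
  also have "\<dots> = 0" using u fF S by (simp add: sum.delta)
  finally show "mat_vec n (wadj T w) ?x i = 0" by simp
qed

lemma dotp_pendant_proj:
  assumes p: "graph_on n T" and S: "(\<Sum>l\<in>pendants T r. (w {r, l})\<^sup>2) \<noteq> 0"
  shows "dotp n (pendant_proj T w r u) (pendant_proj T w r u)
           = (w {r, u})\<^sup>2 / (\<Sum>l\<in>pendants T r. (w {r, l})\<^sup>2)"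
proof -
  let ?F = "pendants T r" and ?S = "\<Sum>l\<in>pendants T r. (w {r, l})\<^sup>2"
  have "dotp n (pendant_proj T w r u) (pendant_proj T w r u) = (\<Sum>j\<in>?F. (w {r, u} / ?S)\<^sup>2 * (w {r, j})\<^sup>2)"
    unfolding dotp_def using pendants_subset[OF p]
    by (subst sum.mono_neutral_right[of "{..<n}" ?F])
      (auto simp: pendant_proj_def power2_eq_square mult_ac finite_pendants[OF p])
  also have "\<dots> = (w {r, u} / ?S)\<^sup>2 * ?S" by (simp add: sum_distrib_left)
  also have "\<dots> = (w {r, u})\<^sup>2 / ?S" using S by (simp add: power2_eq_square)
  finally show ?thesis .
qed

lemma pendant_sedentary:
  assumes p: "graph_on n T" and u: "u \<in> pendants T r"
    and light: "2 * (w {r, u})\<^sup>2 < (\<Sum>l\<in>pendants T r. (w {r, l})\<^sup>2)"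
  shows "sedentary n (wadj T w) u"
proof (rule sedentary_if_kernel_split)
  let ?S = "\<Sum>l\<in>pendants T r. (w {r, l})\<^sup>2"
  have S: "?S > 0" using light by (smt (verit) zero_le_power2)
  show "wadj T w i j = wadj T w j i" for i j by (rule wadj_sym)
  show "u < n" using pendants_subset[OF p] u by auto
  show "mat_vec n (wadj T w) (\<lambda>j. (if j = u then 1 else 0) - pendant_proj T w r u j) = (\<lambda>i. 0)"
    using mat_vec_wadj_pendant_kernel[OF p u] S by simp
  have "dotp n (pendant_proj T w r u) (pendant_proj T w r u) = (w {r, u})\<^sup>2 / ?S"
    using dotp_pendant_proj[OF p] S by simp
  moreover have "2 * ((w {r, u})\<^sup>2 / ?S) < 1" using S light by (simp add: field_simps)
  ultimately show "2 * dotp n (pendant_proj T w r u) (pendant_proj T w r u) < 1" by simp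
qed

lemma heavy_weight_unique:
  fixes a :: "nat \<Rightarrow> real"
  assumes F: "finite F" "3 \<le> card F" and nz: "\<And>l. l \<in> F \<Longrightarrow> a l \<noteq> 0"
    and uv: "u \<in> F" "v \<in> F"
    and heavy: "(\<Sum>l\<in>F. (a l)\<^sup>2) \<le> 2 * (a u)\<^sup>2" "(\<Sum>l\<in>F. (a l)\<^sup>2) \<le> 2 * (a v)\<^sup>2"
  shows "u = v"
proof (rule ccontr)
  assume ne: "u \<noteq> v"
  have "card {u, v} = 2" using ne by simp
  then have "{u, v} \<noteq> F" using F(2) by auto
  then obtain z where z: "z \<in> F" "z \<noteq> u" "z \<noteq> v" using uv by blast
  have "(\<Sum>l\<in>{u, v, z}. (a l)\<^sup>2) \<le> (\<Sum>l\<in>F. (a l)\<^sup>2)"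
    using uv z F by (intro sum_mono2) auto
  moreover have "(\<Sum>l\<in>{u, v, z}. (a l)\<^sup>2) = (a u)\<^sup>2 + (a v)\<^sup>2 + (a z)\<^sup>2" using ne z by simp
  moreover have "(a z)\<^sup>2 > 0" using nz[OF z(1)] by simp
  ultimately show False using heavy by linarith
qed

lemma two_sedentary_pendants:
  assumes p: "graph_on n T" and nz: "\<forall>e\<in>T. w e \<noteq> 0" and c: "3 \<le> card (pendants T r)"
  shows "\<exists>u<n. \<exists>v<n. u \<noteq> v \<and> sedentary n (wadj T w) u \<and> sedentary n (wadj T w) v"
proof -
  let ?F = "pendants T r" and ?S = "\<Sum>l\<in>pendants T r. (w {r, l})\<^sup>2"
  let ?L = "{l \<in> ?F. 2 * (w {r, l})\<^sup>2 < ?S}"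
  have fF: "finite ?F" using finite_pendants[OF p] .
  have nzw: "w {r, l} \<noteq> 0" if "l \<in> ?F" for l
  proof -
    have "{l, r} \<in> T" using that unfolding mem_pendants_iff neighbours_def by auto
    then show ?thesis using nz by (simp add: insert_commute)
  qed
  have "x = y" if "x \<in> ?F - ?L" "y \<in> ?F - ?L" for x y
    using heavy_weight_unique[OF fF c nzw] that by (auto simp: not_less)
  then have "card (?F - ?L) \<le> 1" using fF by (simp add: card_le_Suc0_iff_eq)
  then have "2 \<le> card ?L" using c card_Diff_subset[of ?L ?F] fF by (simp add: card_mono)
  then have "\<not> card ?L \<le> Suc 0" by simp
  then obtain u v where "u \<in> ?L" "v \<in> ?L" "u \<noteq> v"
    using card_le_Suc0_iff_eq[of ?L] fF by auto
  then show ?thesis using pendant_sedentary[OF p] pendants_subset[OF p] by blast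
qed

lemma card_sedentary_ge_pendants:
  assumes p: "graph_on n T" and c: "3 \<le> card (pendants T r)"
  shows "card (pendants T r) \<le> card {u. u < n \<and> sedentary n (wadj T (\<lambda>_. 1)) u}"
proof (rule card_mono)
  show "pendants T r \<subseteq> {u. u < n \<and> sedentary n (wadj T (\<lambda>_. 1)) u}"
    using pendant_sedentary[OF p, of _ r "\<lambda>_. 1"] pendants_subset[OF p] c by auto
qed simp

theorem corollary25:
  shows "almost_all_trees (\<lambda>n T. \<forall>w :: nat set \<Rightarrow> real. (\<forall>e\<in>T. w e \<noteq> 0) \<longrightarrow>
            (\<exists>u<n. \<exists>v<n. u \<noteq> v \<and> sedentary n (wadj T w) u \<and> sedentary n (wadj T w) v))
     \<and> (\<forall>k::nat. k \<ge> 3 \<longrightarrow>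
           almost_all_trees (\<lambda>n T. card {u. u < n \<and> sedentary n (wadj T (\<lambda>_. 1)) u} \<ge> k))"
proof
  show "almost_all_trees (\<lambda>n T. \<forall>w :: nat set \<Rightarrow> real. (\<forall>e\<in>T. w e \<noteq> 0) \<longrightarrow>
          (\<exists>u<n. \<exists>v<n. u \<noteq> v \<and> sedentary n (wadj T w) u \<and> sedentary n (wadj T w) v))"
  proof (rule almost_all_trees_if_hub[where m = 3])
    fix n T assume t: "is_tree n T" and "hubs 3 n T \<noteq> {}"
    then obtain r where "3 \<le> card (pendants T r)" unfolding hubs_def by blast
    then show "\<forall>w :: nat set \<Rightarrow> real. (\<forall>e\<in>T. w e \<noteq> 0) \<longrightarrow>
        (\<exists>u<n. \<exists>v<n. u \<noteq> v \<and> sedentary n (wadj T w) u \<and> sedentary n (wadj T w) v)"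
      using two_sedentary_pendants[OF tree_graph_on[OF t]] by blast
  qed
  show "\<forall>k::nat. k \<ge> 3 \<longrightarrow>
          almost_all_trees (\<lambda>n T. card {u. u < n \<and> sedentary n (wadj T (\<lambda>_. 1)) u} \<ge> k)"
  proof (intro allI impI)
    fix k :: nat assume k: "k \<ge> 3"
    show "almost_all_trees (\<lambda>n T. card {u. u < n \<and> sedentary n (wadj T (\<lambda>_. 1)) u} \<ge> k)"
    proof (rule almost_all_trees_if_hub[where m = k])
      fix n T assume t: "is_tree n T" and "hubs k n T \<noteq> {}"
      then obtain r where "k \<le> card (pendants T r)" unfolding hubs_def by blast
      then show "k \<le> card {u. u < n \<and> sedentary n (wadj T (\<lambda>_. 1)) u}"
        using card_sedentary_ge_pendants[OF tree_graph_on[OF t], of r] k by linarith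
    qed
  qed
qed

end
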